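(* Assume the standing setup below. For every $j$ with $2\le j\le n$, the number of nonzero entries of the change of basis matrix $C(\mathcal{B}_j,\mathcal{B}_{j-1})$ satisfies \[\nu(C(\mathcal{B}_j,\mathcal{B}_{j-1}))\le \Phi_X(G_j,G_{j-1}).\] Moreover, each column of $C(\mathcal{B}_j,\mathcal{B}_{j-1})$ has at most $K_X(G_j,G_{j-1})$ nonzero entries, so that $\nu(C(\mathcal{B}_j,\mathcal{B}_{j-1}))\le K_X(G_j,G_{j-1})\,|X|$.
   Context: For a finite group $G$, $\mathcal{R}(G)$ denotes a fixed complete set of pairwise inequivalent irreducible complex matrix representations of $G$. For a finite-dimensional $\mathbb{C}G$-module $M$ with ordered basis $\mathcal{B}$, $[g]_{\mathcal{B}}$ denotes the matrix of the action of $g$ with respect to $\mathcal{B}$; $\mathcal{B}$ is a symmetry adapted basis of $M$ with respect to $\mathcal{R}(G)$ if there is a fixed partition of the positions into consecutive blocks such that for every $g\in G$, $[g]_{\mathcal{B}}$ is block diagonal with respect to these blocks and each block equals $\rho(g)$ for some $\rho\in\mathcal{R}(G)$ depending only on the block. Standing setup: $G$ is a finite group acting on a finite set $X$; $\mathbb{C}X$ is the space of functions $X\to\mathbb{C}$ with $(g\cdot f)(x)=f(g^{-1}x)$, each $x\in X$ is identified with its indicator function, and the standard basis of $\mathbb{C}X$ is $X$ itself. For a subset $Y\subseteq X$ that is a union of orbits of a subgroup, $\mathbb{C}Y$ is regarded as a submodule of $\mathbb{C}X$. We are given a chain of subgroups $\{1\}=G_1<G_2<\cdots<G_n=G$ and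 sets $\mathcal{R}(G_1),\dots,\mathcal{R}(G_n)$ that are compatible with respect to $\mathbb{C}X$, meaning there is a basis of $\mathbb{C}X$ that is symmetry adapted with respect to $\mathcal{R}(G_i)$ (for $\mathbb{C}X$ restricted to $G_i$) for every $i$. For $1\le j\le n$, $\mathcal{B}_j$ is an orbital symmetry adapted basis with respect to $\mathcal{R}(G_1),\dots,\mathcal{R}(G_j)$: $\mathcal{B}_j$ is the disjoint union, over the $G_j$-orbits $Y\subseteq X$, of bases of $\mathbb{C}Y$, each of which is symmetry adapted with respect to $\mathcal{R}(G_i)$ for every $i\le j$; and $\mathcal{B}_1$ is the standard basis. For bases $\mathcal{B},\mathcal{B}'$ of a vector space $V$, $[v]_{\mathcal{B}}$ is the coordinate vector and $C(\mathcal{B},\mathcal{B}')$ is the matrix with $C(\mathcal{B},\mathcal{B}')[v]_{\mathcal{B}'}=[v]_{\mathcal{B}}$ for all $v$. For a matrix $A$, $\nu(A)$ is the number of nonzero entries of $A$. For subgroups $H\le K\le G$ with $K$ acting transitively on a finite set $Y$, write $\mathbb{C}Y\cong\kappa_1N_1\oplus\cdots\oplus\kappa_sN_s$ as $\mathbb{C}H$-modules where $N_1,\dots,N_s$ are a complete set of irreducible $\mathbb{C}H$-modules; set $K_Y(K,H)=\max\{\kappa_1,\dots,\kappa_s\}$ and $\Phi_Y(K,H)=\sum_{i=1}^s\kappa_i^2\dim N_i$. If $K$ acts on $X$ with orbits $X_1,\dots,X_t$, set $\Phi_X(K,H)=\sum_{i=1}^t\Phi_{X_i}(K,H)$ and $K_X(K,H)=\max_i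 K_{X_i}(K,H)$. *)

theory Defs
  imports "HOL-Algebra.Group_Action" Complex_Main
begin

section \<open>Matrices over C (as extensional functions on index pairs)\<close>

definition mat_mult :: "nat \<Rightarrow> (nat \<Rightarrow> nat \<Rightarrow> complex) \<Rightarrow> (nat \<Rightarrow> nat \<Rightarrow> complex) \<Rightarrow> nat \<Rightarrow> nat \<Rightarrow> complex"
  where "mat_mult d A B = (\<lambda>i k. \<Sum>l<d. A i l * B l k)"

definition mat_id :: "nat \<Rightarrow> nat \<Rightarrow> nat \<Rightarrow> complex"
  where "mat_id d = (\<lambda>i k. if i = k \<and> i < d then 1 else 0)"

definition mat_vec :: "nat \<Rightarrow> (nat \<Rightarrow> nat \<Rightarrow> complex) \<Rightarrow> (nat \<Rightarrow> complex) \<Rightarrow> nat \<Rightarrow> complex"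
  where "mat_vec d A v = (\<lambda>i. \<Sum>l<d. A i l * v l)"

text \<open>Vectors of C^d: functions nat => complex vanishing from position d on.\<close>
definition cvec :: "nat \<Rightarrow> (nat \<Rightarrow> complex) set"
  where "cvec d = {v. \<forall>i\<ge>d. v i = 0}"

text \<open>A matrix representation of degree d is a pair (d, rho).\<close>
type_synonym 'g mrep = "nat \<times> ('g \<Rightarrow> nat \<Rightarrow> nat \<Rightarrow> complex)"

definition is_mrep :: "('g, 'm) monoid_scheme \<Rightarrow> 'g set \<Rightarrow> 'g mrep \<Rightarrow> bool"
  where "is_mrep G H r \<longleftrightarrow> (let d = fst r; \<rho> = snd r in
     0 < d \<and>
     (\<forall>h\<in>H. \<forall>i k. (d \<le> i \<or> d \<le> k) \<longrightarrow> \<rho> h i k = 0) \<and>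
     \<rho> \<one>\<^bsub>G\<^esub> = mat_id d \<and>
     (\<forall>h1\<in>H. \<forall>h2\<in>H. \<rho> (h1 \<otimes>\<^bsub>G\<^esub> h2) = mat_mult d (\<rho> h1) (\<rho> h2)))"

definition irreducible_mrep :: "('g, 'm) monoid_scheme \<Rightarrow> 'g set \<Rightarrow> 'g mrep \<Rightarrow> bool"
  where "irreducible_mrep G H r \<longleftrightarrow> is_mrep G H r \<and>
     (\<forall>W. W \<subseteq> cvec (fst r) \<and> (\<lambda>_. 0) \<in> W \<and>
          (\<forall>v\<in>W. \<forall>w\<in>W. (\<lambda>i. v i + w i) \<in> W) \<and>
          (\<forall>c. \<forall>v\<in>W. (\<lambda>i. c * v i) \<in> W) \<and>
          (\<forall>h\<in>H. \<forall>v\<in>W. mat_vec (fst r) (snd r h) v \<in> W)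
        \<longrightarrow> W = {\<lambda>_. 0} \<or> W = cvec (fst r))"

definition equiv_mrep :: "'g set \<Rightarrow> 'g mrep \<Rightarrow> 'g mrep \<Rightarrow> bool"
  where "equiv_mrep H r s \<longleftrightarrow> fst r = fst s \<and>
     (\<exists>P Q. mat_mult (fst r) P Q = mat_id (fst r) \<and> mat_mult (fst r) Q P = mat_id (fst r) \<and>
        (\<forall>h\<in>H. mat_mult (fst r) P (snd r h) = mat_mult (fst r) (snd s h) P))"

definition complete_irreps :: "('g, 'm) monoid_scheme \<Rightarrow> 'g set \<Rightarrow> 'g mrep set \<Rightarrow> bool"
  where "complete_irreps G H R \<longleftrightarrow>
     (\<forall>r\<in>R. irreducible_mrep G H r) \<and>
     (\<forall>r\<in>R. \<forall>s\<in>R. r \<noteq> s \<longrightarrow> \<not> equiv_mrep H r s) \<and>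
     (\<forall>r. irreducible_mrep G H r \<longrightarrow> (\<exists>s\<in>R. equiv_mrep H r s))"

text \<open>Elements of CX are functions 'x => complex vanishing outside X.\<close>
definition CV :: "'x set \<Rightarrow> ('x \<Rightarrow> complex) set"
  where "CV Y = {f. \<forall>x. x \<notin> Y \<longrightarrow> f x = 0}"

definition indic :: "'x \<Rightarrow> 'x \<Rightarrow> complex"
  where "indic x = (\<lambda>y. if y = x then 1 else 0)"

definition fun_act :: "('g, 'm) monoid_scheme \<Rightarrow> 'x set \<Rightarrow> ('g \<Rightarrow> 'x \<Rightarrow> 'x) \<Rightarrow> 'g \<Rightarrow> ('x \<Rightarrow> complex) \<Rightarrow> 'x \<Rightarrow> complex"
  where "fun_act G X \<phi> g f = (\<lambda>x. if x \<in> X then f (\<phi> (inv\<^bsub>G\<^esub> g) x) else 0)"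

definition lin_comb :: "('x \<Rightarrow> complex) list \<Rightarrow> (nat \<Rightarrow> complex) \<Rightarrow> 'x \<Rightarrow> complex"
  where "lin_comb B c = (\<lambda>x. \<Sum>i<length B. c i * (B ! i) x)"

definition is_basis :: "'x set \<Rightarrow> ('x \<Rightarrow> complex) list \<Rightarrow> bool"
  where "is_basis Y B \<longleftrightarrow> set B \<subseteq> CV Y \<and>
     (\<forall>c. lin_comb B c = (\<lambda>_. 0) \<longrightarrow> (\<forall>i<length B. c i = 0)) \<and>
     (\<forall>v\<in>CV Y. \<exists>c. v = lin_comb B c)"

definition coord :: "('x \<Rightarrow> complex) list \<Rightarrow> ('x \<Rightarrow> complex) \<Rightarrow> nat \<Rightarrow> complex"
  where "coord B v = (THE c. v = lin_comb B c \<and> (\<forall>i\<ge>length B. c i = 0))"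

text \<open>Change of basis matrix C(B,B'): C [v]_B' = [v]_B, i.e. column k is [B' ! k]_B.\<close>
definition change_basis :: "('x \<Rightarrow> complex) list \<Rightarrow> ('x \<Rightarrow> complex) list \<Rightarrow> nat \<Rightarrow> nat \<Rightarrow> complex"
  where "change_basis B B' = (\<lambda>i k. coord B (B' ! k) i)"

definition nnz :: "nat \<Rightarrow> nat \<Rightarrow> (nat \<Rightarrow> nat \<Rightarrow> complex) \<Rightarrow> nat"
  where "nnz m n A = card {(i, k). i < m \<and> k < n \<and> A i k \<noteq> 0}"

fun bdiag :: "'g mrep list \<Rightarrow> 'g \<Rightarrow> nat \<Rightarrow> nat \<Rightarrow> complex" where
  "bdiag [] h i k = 0"
| "bdiag (r # rs) h i k =
     (if i < fst r \<and> k < fst r then snd r h i k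
      else if fst r \<le> i \<and> fst r \<le> k then bdiag rs h (i - fst r) (k - fst r) else 0)"

definition adapted_blocks :: "('g, 'm) monoid_scheme \<Rightarrow> 'x set \<Rightarrow> ('g \<Rightarrow> 'x \<Rightarrow> 'x) \<Rightarrow> 'g set
    \<Rightarrow> ('x \<Rightarrow> complex) list \<Rightarrow> 'g mrep list \<Rightarrow> bool"
  where "adapted_blocks G X \<phi> H B bs \<longleftrightarrow> sum_list (map fst bs) = length B \<and>
     (\<forall>h\<in>H. \<forall>k<length B. fun_act G X \<phi> h (B ! k) = lin_comb B (\<lambda>i. bdiag bs h i k))"

definition sym_adapted :: "('g, 'm) monoid_scheme \<Rightarrow> 'x set \<Rightarrow> ('g \<Rightarrow> 'x \<Rightarrow> 'x) \<Rightarrow> 'g set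
    \<Rightarrow> 'g mrep set \<Rightarrow> 'x set \<Rightarrow> ('x \<Rightarrow> complex) list \<Rightarrow> bool"
  where "sym_adapted G X \<phi> H R Y B \<longleftrightarrow> is_basis Y B \<and>
     (\<exists>bs. set bs \<subseteq> R \<and> adapted_blocks G X \<phi> H B bs)"

definition sub_orbits :: "'g set \<Rightarrow> 'x set \<Rightarrow> ('g \<Rightarrow> 'x \<Rightarrow> 'x) \<Rightarrow> 'x set set"
  where "sub_orbits H X \<phi> = {{\<phi> h x | h. h \<in> H} | x. x \<in> X}"

definition orbital_sa :: "('g, 'm) monoid_scheme \<Rightarrow> 'x set \<Rightarrow> ('g \<Rightarrow> 'x \<Rightarrow> 'x)
    \<Rightarrow> (nat \<Rightarrow> 'g set) \<Rightarrow> (nat \<Rightarrow> 'g mrep set) \<Rightarrow> nat \<Rightarrow> ('x \<Rightarrow> complex) list \<Rightarrow> bool"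
  where "orbital_sa G X \<phi> Gs Rs j B \<longleftrightarrow>
     (\<exists>Ys Cs. length Ys = length Cs \<and> distinct Ys \<and> set Ys = sub_orbits (Gs j) X \<phi> \<and>
        B = concat Cs \<and>
        (\<forall>l<length Ys. \<forall>i\<in>{1..j}. sym_adapted G X \<phi> (Gs i) (Rs i) (Ys ! l) (Cs ! l)))"

text \<open>Multiplicity of the irreducible (given by r in R(H)) in CY as a CH-module: the number of
  summands isomorphic to r in a decomposition of CY into irreducible CH-submodules
  (each summand given by a block of basis vectors on which H acts by a member of R).\<close>
definition mult :: "('g, 'm) monoid_scheme \<Rightarrow> 'x set \<Rightarrow> ('g \<Rightarrow> 'x \<Rightarrow> 'x) \<Rightarrow> 'g set
    \<Rightarrow> 'g mrep set \<Rightarrow> 'x set \<Rightarrow> 'g mrep \<Rightarrow> nat"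
  where "mult G X \<phi> H R Y r = (THE \<kappa>. \<exists>B bs. is_basis Y B \<and> set bs \<subseteq> R \<and>
      adapted_blocks G X \<phi> H B bs \<and> length (filter (\<lambda>s. s = r) bs) = \<kappa>)"

definition PhiY :: "('g, 'm) monoid_scheme \<Rightarrow> 'x set \<Rightarrow> ('g \<Rightarrow> 'x \<Rightarrow> 'x) \<Rightarrow> 'g set
    \<Rightarrow> 'g mrep set \<Rightarrow> 'x set \<Rightarrow> nat"
  where "PhiY G X \<phi> H R Y = (\<Sum>r\<in>R. (mult G X \<phi> H R Y r)\<^sup>2 * fst r)"

definition KY :: "('g, 'm) monoid_scheme \<Rightarrow> 'x set \<Rightarrow> ('g \<Rightarrow> 'x \<Rightarrow> 'x) \<Rightarrow> 'g set
    \<Rightarrow> 'g mrep set \<Rightarrow> 'x set \<Rightarrow> nat"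
  where "KY G X \<phi> H R Y = Max ((\<lambda>r. mult G X \<phi> H R Y r) ` R)"

definition PhiX :: "('g, 'm) monoid_scheme \<Rightarrow> 'x set \<Rightarrow> ('g \<Rightarrow> 'x \<Rightarrow> 'x) \<Rightarrow> 'g set \<Rightarrow> 'g set
    \<Rightarrow> 'g mrep set \<Rightarrow> nat"
  where "PhiX G X \<phi> K H R = (\<Sum>Y\<in>sub_orbits K X \<phi>. PhiY G X \<phi> H R Y)"

definition KX :: "('g, 'm) monoid_scheme \<Rightarrow> 'x set \<Rightarrow> ('g \<Rightarrow> 'x \<Rightarrow> 'x) \<Rightarrow> 'g set \<Rightarrow> 'g set
    \<Rightarrow> 'g mrep set \<Rightarrow> nat"
  where "KX G X \<phi> K H R = Max ((\<lambda>Y. KY G X \<phi> H R Y) ` sub_orbits K X \<phi>)"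

end

theory Submission
  imports Defs "HOL-Library.Function_Algebras" "Jordan_Normal_Form.Spectral_Radius"
begin

text \<open>Label every vector of B_j by its G_j-orbit, the irreducible representation of G_(j-1)
  of its block and its position in that block, and every vector of B_(j-1) likewise, using the
  G_j-orbit that contains its G_(j-1)-orbit. By Schur's lemma an entry of C(B_j, B_(j-1)) or of
  its inverse vanishes unless the row and column labels agree. Two mutually inverse matrices
  that are block diagonal for the same labelling have square blocks, and the block with label
  (Y, r, q) has as many rows as r occurs in CY. Hence there are at most
  \<Sum> mult^2 dim r = Phi nonzero entries, and each column meets a single block of at most K rows.
  The same argument for two adapted bases of one orbit shows that multiplicities are well
  defined, and the orthogonality relations show that R(G_(j-1)) is finite, so that the sums
  and maxima defining Phi and K range over finite sets.\<close>

section \<open>Positions in a concatenation of blocks\<close>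

fun block_of :: "nat list \<Rightarrow> nat \<Rightarrow> nat" where
  "block_of [] i = 0"
| "block_of (d # ds) i = (if i < d then 0 else Suc (block_of ds (i - d)))"

fun pos_in_block :: "nat list \<Rightarrow> nat \<Rightarrow> nat" where
  "pos_in_block [] i = i"
| "pos_in_block (d # ds) i = (if i < d then i else pos_in_block ds (i - d))"

definition block_start :: "nat list \<Rightarrow> nat \<Rightarrow> nat" where
  "block_start ds a = sum_list (take a ds)"

lemma block_index:
  "i < sum_list ds \<Longrightarrow> block_of ds i < length ds \<and> pos_in_block ds i < ds ! block_of ds i
     \<and> block_start ds (block_of ds i) + pos_in_block ds i = i"
proof (induction ds arbitrary: i)
  case (Cons d ds)
  show ?case
  proof (cases "i < d")
    case False
    with Cons.prems have "i - d < sum_list ds" by simp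
    from Cons.IH[OF this] False show ?thesis by (auto simp: block_start_def)
  qed (simp add: block_start_def)
qed simp

lemma block_index_start:
  "a < length ds \<Longrightarrow> p < ds ! a
     \<Longrightarrow> block_of ds (block_start ds a + p) = a \<and> pos_in_block ds (block_start ds a + p) = p"
proof (induction ds arbitrary: a)
  case (Cons d ds)
  then show ?case by (cases a) (auto simp: block_start_def)
qed simp

lemma block_start_add_less: "a < length ds \<Longrightarrow> p < ds ! a \<Longrightarrow> block_start ds a + p < sum_list ds"
proof (induction ds arbitrary: a)
  case (Cons d ds)
  then show ?case by (cases a) (auto simp: block_start_def)
qed simp

lemma bij_betw_block:
  assumes "a < length ds"
  shows "bij_betw (\<lambda>p. block_start ds a + p) {..<ds ! a} {i. i < sum_list ds \<and> block_of ds i = a}"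
  unfolding bij_betw_def
proof
  show "inj_on (\<lambda>p. block_start ds a + p) {..<ds ! a}" by (auto simp: inj_on_def)
  show "(\<lambda>p. block_start ds a + p) ` {..<ds ! a} = {i. i < sum_list ds \<and> block_of ds i = a}"
  proof (intro equalityI subsetI)
    fix i assume "i \<in> (\<lambda>p. block_start ds a + p) ` {..<ds ! a}"
    then show "i \<in> {i. i < sum_list ds \<and> block_of ds i = a}"
      using block_index_start[OF assms] block_start_add_less[OF assms] by auto
  next
    fix i assume "i \<in> {i. i < sum_list ds \<and> block_of ds i = a}"
    then show "i \<in> (\<lambda>p. block_start ds a + p) ` {..<ds ! a}"
      using block_index[of i ds] by (auto intro!: image_eqI[where x="pos_in_block ds i"])
  qed
qed

lemma sum_over_block:
  assumes "a < length ds" "\<And>i. i < sum_list ds \<Longrightarrow> block_of ds i \<noteq> a \<Longrightarrow> f i = 0"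
  shows "(\<Sum>i<sum_list ds. f i) = (\<Sum>p<ds ! a. f (block_start ds a + p))"
proof -
  have "(\<Sum>i<sum_list ds. f i) = (\<Sum>i\<in>{i. i < sum_list ds \<and> block_of ds i = a}. f i)"
    by (rule sum.mono_neutral_right) (use assms(2) in auto)
  then show ?thesis using sum.reindex_bij_betw[OF bij_betw_block[OF assms(1)], of f] by simp
qed

lemma card_block_filter:
  assumes "l < length ds"
  shows "card {i. i < sum_list ds \<and> block_of ds i = l \<and> Q (pos_in_block ds i)}
       = card {p. p < ds ! l \<and> Q p}"
proof -
  have "bij_betw (\<lambda>p. block_start ds l + p) {p. p < ds ! l \<and> Q p}
      {i. i < sum_list ds \<and> block_of ds i = l \<and> Q (pos_in_block ds i)}"
  proof (rule bij_betw_subset[OF bij_betw_block[OF assms]])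
    show "(\<lambda>p. block_start ds l + p) ` {p. p < ds ! l \<and> Q p}
        = {i. i < sum_list ds \<and> block_of ds i = l \<and> Q (pos_in_block ds i)}"
    proof (intro equalityI subsetI)
      fix i assume "i \<in> (\<lambda>p. block_start ds l + p) ` {p. p < ds ! l \<and> Q p}"
      then show "i \<in> {i. i < sum_list ds \<and> block_of ds i = l \<and> Q (pos_in_block ds i)}"
        using block_index_start[OF assms] block_start_add_less[OF assms] by auto
    next
      fix i assume "i \<in> {i. i < sum_list ds \<and> block_of ds i = l \<and> Q (pos_in_block ds i)}"
      then show "i \<in> (\<lambda>p. block_start ds l + p) ` {p. p < ds ! l \<and> Q p}"
        using block_index[of i ds] by (auto intro!: image_eqI[where x="pos_in_block ds i"])
    qed
  qed auto
  then show ?thesis by (rule bij_betw_same_card[symmetric])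
qed

lemma card_pos_in_block_eq:
  "card {i. i < sum_list ds \<and> P (block_of ds i) \<and> pos_in_block ds i = q}
     = card {a. a < length ds \<and> P a \<and> q < ds ! a}"
proof -
  have "bij_betw (\<lambda>a. block_start ds a + q) {a. a < length ds \<and> P a \<and> q < ds ! a}
      {i. i < sum_list ds \<and> P (block_of ds i) \<and> pos_in_block ds i = q}"
    unfolding bij_betw_def
  proof
    show "inj_on (\<lambda>a. block_start ds a + q) {a. a < length ds \<and> P a \<and> q < ds ! a}"
      by (auto simp: inj_on_def dest: block_index_start) (metis block_index_start)
    show "(\<lambda>a. block_start ds a + q) ` {a. a < length ds \<and> P a \<and> q < ds ! a}
        = {i. i < sum_list ds \<and> P (block_of ds i) \<and> pos_in_block ds i = q}"
    proof (intro equalityI subsetI)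
      fix i assume "i \<in> (\<lambda>a. block_start ds a + q) ` {a. a < length ds \<and> P a \<and> q < ds ! a}"
      then show "i \<in> {i. i < sum_list ds \<and> P (block_of ds i) \<and> pos_in_block ds i = q}"
        using block_index_start block_start_add_less by auto
    next
      fix i assume "i \<in> {i. i < sum_list ds \<and> P (block_of ds i) \<and> pos_in_block ds i = q}"
      then show "i \<in> (\<lambda>a. block_start ds a + q) ` {a. a < length ds \<and> P a \<and> q < ds ! a}"
        using block_index[of i ds] by (auto intro!: image_eqI[where x="block_of ds i"])
    qed
  qed
  then show ?thesis by (rule bij_betw_same_card[symmetric])
qed

lemma nth_concat_block:
  "i < length (concat Cs)
     \<Longrightarrow> concat Cs ! i = Cs ! block_of (map length Cs) i ! pos_in_block (map length Cs) i"
  by (induction Cs arbitrary: i) (auto simp: nth_append)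

definition block_label :: "(nat \<times> 'b) list \<Rightarrow> nat \<Rightarrow> (nat \<times> 'b) \<times> nat" where
  "block_label bs p = (bs ! block_of (map fst bs) p, pos_in_block (map fst bs) p)"

lemma card_block_label:
  assumes "q < fst r"
  shows "card {p. p < sum_list (map fst bs) \<and> block_label bs p = (r, q)}
       = length (filter (\<lambda>s. s = r) bs)"
proof -
  have "card {p. p < sum_list (map fst bs) \<and> block_label bs p = (r, q)}
      = card {a. a < length (map fst bs) \<and> bs ! a = r \<and> q < map fst bs ! a}"
    unfolding block_label_def using card_pos_in_block_eq[of "map fst bs" "\<lambda>a. bs ! a = r" q]
    by simp
  also have "\<dots> = card {a. a < length bs \<and> bs ! a = r}"
    using assms by (intro arg_cong[where f=card]) auto
  also have "\<dots> = length (filter (\<lambda>s. s = r) bs)" by (simp add: length_filter_conv_card)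
  finally show ?thesis .
qed

lemma bdiag_block:
  assumes "i < sum_list (map fst bs)" "k < sum_list (map fst bs)"
  shows "bdiag bs h i k = (if block_of (map fst bs) i = block_of (map fst bs) k
      then snd (bs ! block_of (map fst bs) k) h
        (pos_in_block (map fst bs) i) (pos_in_block (map fst bs) k)
     else 0)"
  using assms by (induction bs arbitrary: i k) (auto simp: not_less)

section \<open>Bases and coordinates\<close>

interpretation function_space: vector_space "(\<lambda>c (f::'a\<Rightarrow>complex) x. c * f x)"
  by unfold_locales (auto simp: algebra_simps fun_eq_iff)

lemma sum_apply: "(\<Sum>a\<in>A. f a) x = (\<Sum>a\<in>A. f a x)"
  by (induction A rule: infinite_finite_induct) auto

definition unit_fun :: "'a \<Rightarrow> 'a \<Rightarrow> complex" where
  "unit_fun a = (\<lambda>t. if t = a then 1 else 0)"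

lemma inj_unit_fun: "inj unit_fun"
  by (rule injI) (metis unit_fun_def zero_neq_one)

lemma independent_unit_funs: "function_space.independent (unit_fun ` I)"
  unfolding function_space.independent_explicit_module
proof (intro allI impI)
  fix t u v
  assume t: "finite t" "t \<subseteq> unit_fun ` I" and zero: "(\<Sum>v\<in>t. (\<lambda>x. u v * v x)) = 0" and v: "v \<in> t"
  then obtain i where i: "v = unit_fun i" by auto
  have "(\<Sum>w\<in>t. u w * w i) = (\<Sum>w\<in>{v}. u w * w i)"
  proof (rule sum.mono_neutral_right)
    show "\<forall>w\<in>t - {v}. u w * w i = 0"
    proof
      fix w assume w: "w \<in> t - {v}"
      then obtain i' where i': "w = unit_fun i'" using t by auto
      with w i have "i' \<noteq> i" by auto
      then show "u w * w i = 0" using i' by (simp add: unit_fun_def)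
    qed
  qed (use t v in auto)
  moreover have "(\<Sum>w\<in>t. u w * w i) = 0"
    using fun_cong[OF zero, of i] by (simp add: sum_apply)
  ultimately show "u v = 0" using i by (simp add: unit_fun_def)
qed

lemma in_span_unit_funs:
  assumes "finite A" "\<And>x. x \<notin> A \<Longrightarrow> w x = 0"
  shows "w \<in> function_space.span (unit_fun ` A)"
proof -
  have "w = (\<Sum>a\<in>A. (\<lambda>x. w a * unit_fun a x))"
  proof
    fix x
    show "w x = (\<Sum>a\<in>A. (\<lambda>x. w a * unit_fun a x)) x"
    proof (cases "x \<in> A")
      case True
      have "(\<Sum>a\<in>A. w a * unit_fun a x) = (\<Sum>a\<in>{x}. w a * unit_fun a x)"
        by (rule sum.mono_neutral_right) (use assms(1) True in \<open>auto simp: unit_fun_def\<close>)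
      then show ?thesis by (simp add: sum_apply unit_fun_def)
    qed (use assms(2) in \<open>auto simp: sum_apply unit_fun_def intro!: sum.neutral\<close>)
  qed
  also have "\<dots> \<in> function_space.span (unit_fun ` A)"
    by (intro function_space.span_sum function_space.span_scale function_space.span_base) auto
  finally show ?thesis .
qed

text \<open>The columns of A span the unit vectors indexed by I.\<close>
lemma card_le_of_right_inverse:
  fixes A A' :: "nat \<Rightarrow> nat \<Rightarrow> complex"
  assumes fJ: "finite J"
    and inv: "\<And>i i'. i \<in> I \<Longrightarrow> i' \<in> I \<Longrightarrow> (\<Sum>k\<in>J. A i k * A' k i') = (if i = i' then 1 else 0)"
  shows "card I \<le> card J"
proof -
  define a :: "nat \<Rightarrow> nat \<Rightarrow> complex" where "a k = (\<lambda>t. if t \<in> I then A t k else 0)" for k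
  have unit_fun_sum: "unit_fun i = (\<Sum>k\<in>J. (\<lambda>x. A' k i * a k x))" if "i \<in> I" for i
  proof
    fix t
    show "unit_fun i t = (\<Sum>k\<in>J. (\<lambda>x. A' k i * a k x)) t"
    proof (cases "t \<in> I")
      case True
      then show ?thesis unfolding sum_apply using inv[OF True that]
        by (auto simp: unit_fun_def a_def mult.commute)
    next
      case False
      then have "t \<noteq> i" using that by auto
      then show ?thesis unfolding sum_apply using False by (auto simp: unit_fun_def a_def)
    qed
  qed
  have span: "unit_fun ` I \<subseteq> function_space.span (a ` J)"
  proof
    fix v assume "v \<in> unit_fun ` I"
    then obtain i where i: "i \<in> I" "v = unit_fun i" by auto
    show "v \<in> function_space.span (a ` J)"
      unfolding i(2) unit_fun_sum[OF i(1)]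
      by (intro function_space.span_sum function_space.span_scale function_space.span_base) auto
  qed
  have "finite (unit_fun ` I) \<and> card (unit_fun ` I) \<le> card (a ` J)"
    by (rule function_space.independent_span_bound[OF _ independent_unit_funs span])
      (use fJ in auto)
  then have "card I \<le> card (a ` J)"
    using card_image[OF inj_on_subset[OF inj_unit_fun subset_UNIV, of I]] by simp
  also have "\<dots> \<le> card J" by (rule card_image_le[OF fJ])
  finally show ?thesis .
qed

lemma card_eq_of_inverse:
  fixes A A' :: "nat \<Rightarrow> nat \<Rightarrow> complex"
  assumes "finite I" "finite J"
    and "\<And>i i'. i \<in> I \<Longrightarrow> i' \<in> I \<Longrightarrow> (\<Sum>k\<in>J. A i k * A' k i') = (if i = i' then 1 else 0)"
    and "\<And>k k'. k \<in> J \<Longrightarrow> k' \<in> J \<Longrightarrow> (\<Sum>i\<in>I. A' k i * A i k') = (if k = k' then 1 else 0)"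
  shows "card I = card J"
  using card_le_of_right_inverse[where I=I and J=J and A=A and A'=A']
    card_le_of_right_inverse[where I=J and J=I and A=A' and A'=A] assms
  by (simp add: le_antisym)

lemma lin_comb_diff: "lin_comb B (\<lambda>i. c i - c' i) = (\<lambda>x. lin_comb B c x - lin_comb B c' x)"
  unfolding lin_comb_def by (auto simp: algebra_simps sum_subtractf)

lemma is_basis_coeff_unique:
  assumes "is_basis Y B" "lin_comb B c = lin_comb B c'" "i < length B"
  shows "c i = c' i"
proof -
  have "lin_comb B (\<lambda>i. c i - c' i) = (\<lambda>_. 0)" using assms(2) by (simp add: lin_comb_diff)
  then have "c i - c' i = 0" using assms(1,3) unfolding is_basis_def by blast
  then show ?thesis by simp
qed

lemma coord_eqI:
  assumes "is_basis Y B" "v = lin_comb B c" "\<And>i. length B \<le> i \<Longrightarrow> c i = 0"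
  shows "coord B v = c"
  unfolding coord_def
proof (rule the_equality)
  show "v = lin_comb B c \<and> (\<forall>i\<ge>length B. c i = 0)" using assms by auto
  fix c' assume c': "v = lin_comb B c' \<and> (\<forall>i\<ge>length B. c' i = 0)"
  show "c' = c"
  proof
    fix i show "c' i = c i"
      using is_basis_coeff_unique[OF assms(1), of c' c i] c' assms by (cases "i < length B") auto
  qed
qed

lemma is_basis_nth_CV: "is_basis Y B \<Longrightarrow> k < length B \<Longrightarrow> B ! k \<in> CV Y"
  unfolding is_basis_def by auto

lemma lin_comb_coord:
  assumes "is_basis Y B" "v \<in> CV Y"
  shows "v = lin_comb B (coord B v)" "\<And>i. length B \<le> i \<Longrightarrow> coord B v i = 0"
proof -
  obtain c where c: "v = lin_comb B c" using assms unfolding is_basis_def by blast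
  let ?c = "\<lambda>i. if i < length B then c i else 0"
  have trunc: "lin_comb B c = lin_comb B ?c" by (auto simp: lin_comb_def)
  have "coord B v = ?c" by (rule coord_eqI[OF assms(1)]) (use c trunc in auto)
  then show "v = lin_comb B (coord B v)" "\<And>i. length B \<le> i \<Longrightarrow> coord B v i = 0"
    using c trunc by auto
qed

lemma coord_nth:
  assumes "is_basis Y B" "k < length B"
  shows "coord B (B ! k) = (\<lambda>i. if i = k then 1 else 0)"
proof (rule coord_eqI[OF assms(1)])
  show "B ! k = lin_comb B (\<lambda>i. if i = k then 1 else 0)"
  proof
    fix x
    have "lin_comb B (\<lambda>i. if i = k then 1 else 0) x = (\<Sum>i\<in>{k}. (if i = k then 1 else 0) * (B ! i) x)"
      unfolding lin_comb_def by (rule sum.mono_neutral_right) (use assms(2) in auto)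
    then show "(B ! k) x = lin_comb B (\<lambda>i. if i = k then 1 else 0) x" by simp
  qed
qed (use assms(2) in auto)

lemma coord_zero: "is_basis Y B \<Longrightarrow> coord B (\<lambda>_. 0) = (\<lambda>_. 0)"
  by (rule coord_eqI) (auto simp: lin_comb_def)

lemma change_basis_inverse:
  assumes B: "is_basis Y B" and B': "is_basis Y B'" and i: "i < length B" and i': "i' < length B"
  shows "(\<Sum>k<length B'. change_basis B B' i k * change_basis B' B k i') = (if i = i' then 1 else 0)"
proof -
  let ?c' = "coord B' (B ! i')"
  let ?d = "\<lambda>i. (\<Sum>k<length B'. coord B (B' ! k) i * ?c' k)"
  have e1: "B ! i' = lin_comb B' ?c'" using lin_comb_coord[OF B' is_basis_nth_CV[OF B i']] by blast
  have e2: "B' ! k = lin_comb B (coord B (B' ! k))" if "k < length B'" for k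
    using lin_comb_coord[OF B is_basis_nth_CV[OF B' that]] by blast
  have "B ! i' = lin_comb B ?d"
  proof
    fix x
    have "(B ! i') x = (\<Sum>k<length B'. ?c' k * (B' ! k) x)"
      by (subst e1) (simp add: lin_comb_def)
    also have "\<dots> = (\<Sum>k<length B'. ?c' k * lin_comb B (coord B (B' ! k)) x)"
      by (rule sum.cong) (use e2 in auto)
    also have "\<dots> = (\<Sum>k<length B'. \<Sum>l<length B. ?c' k * (coord B (B' ! k) l * (B ! l) x))"
      by (simp add: lin_comb_def sum_distrib_left)
    also have "\<dots> = (\<Sum>l<length B. \<Sum>k<length B'. ?c' k * (coord B (B' ! k) l * (B ! l) x))"
      by (rule sum.swap)
    also have "\<dots> = lin_comb B ?d x"
      unfolding lin_comb_def sum_distrib_right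
      by (auto intro!: sum.cong simp: mult.commute mult.left_commute)
    finally show "(B ! i') x = lin_comb B ?d x" .
  qed
  moreover have "?d l = 0" if "length B \<le> l" for l
    using lin_comb_coord(2)[OF B is_basis_nth_CV[OF B'] that] by simp
  ultimately have "coord B (B ! i') = ?d" by (intro coord_eqI[OF B]) auto
  then show ?thesis using coord_nth[OF B i'] by (simp add: change_basis_def mult.commute fun_eq_iff)
qed

lemma is_basis_length_eq:
  assumes "is_basis Y B" "is_basis Y B'"
  shows "length B = length B'"
proof -
  have "card {..<length B} = card {..<length B'}"
    by (rule card_eq_of_inverse[where A="change_basis B B'" and A'="change_basis B' B"])
       (use change_basis_inverse[OF assms] change_basis_inverse[OF assms(2,1)] in auto)
  then show ?thesis by simp
qed

lemma is_basis_indic: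
  assumes "distinct xs"
  shows "is_basis (set xs) (map indic xs)"
  unfolding is_basis_def
proof (intro conjI allI impI ballI)
  show "set (map indic xs) \<subseteq> CV (set xs)" by (auto simp: CV_def indic_def)
next
  have at_nth: "lin_comb (map indic xs) c (xs ! i) = c i" if "i < length xs" for c i
  proof -
    have "lin_comb (map indic xs) c (xs ! i) = (\<Sum>l<length xs. c l * (if xs ! i = xs ! l then 1 else 0))"
      by (simp add: lin_comb_def indic_def)
    also have "\<dots> = (\<Sum>l\<in>{i}. c l * (if xs ! i = xs ! l then 1 else 0))"
      by (rule sum.mono_neutral_right) (use that assms in \<open>auto simp: nth_eq_iff_index_eq\<close>)
    finally show ?thesis by simp
  qed
  fix c i assume "lin_comb (map indic xs) c = (\<lambda>_. 0)" "i < length (map indic xs)"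
  then show "c i = 0" using at_nth[of i c] by simp
next
  fix v assume v: "v \<in> CV (set xs)"
  show "\<exists>c. v = lin_comb (map indic xs) c"
  proof (intro exI ext)
    fix x
    show "v x = lin_comb (map indic xs) (\<lambda>l. v (xs ! l)) x"
    proof (cases "x \<in> set xs")
      case True
      then obtain i where i: "i < length xs" "xs ! i = x" by (auto simp: in_set_conv_nth)
      have "lin_comb (map indic xs) (\<lambda>l. v (xs ! l)) x
          = (\<Sum>l<length xs. v (xs ! l) * (if x = xs ! l then 1 else 0))"
        by (simp add: lin_comb_def indic_def)
      also have "\<dots> = (\<Sum>l\<in>{i}. v (xs ! l) * (if x = xs ! l then 1 else 0))"
        by (rule sum.mono_neutral_right) (use i assms in \<open>auto simp: nth_eq_iff_index_eq\<close>)
      finally show ?thesis using i by simp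
    next
      case False
      then show ?thesis using v nth_mem[of _ xs] unfolding lin_comb_def indic_def CV_def
        by (auto intro!: sum.neutral)
    qed
  qed
qed

lemma is_basis_length_card:
  assumes "finite X" "is_basis X B"
  shows "length B = card X"
proof -
  obtain xs where xs: "distinct xs" "set xs = X" using assms(1) finite_distinct_list by blast
  have "length B = length (map indic xs)"
    using is_basis_length_eq[OF assms(2)] is_basis_indic[OF xs(1)] xs(2) by blast
  then show ?thesis using xs by (metis distinct_card length_map)
qed

section \<open>Schur's lemma for matrix representations\<close>

lemma mat_vec_mat_mult: "mat_vec n A (mat_vec m B v) = mat_vec m (mat_mult n A B) v"
proof
  fix i
  have "mat_vec n A (mat_vec m B v) i = (\<Sum>l<n. \<Sum>t<m. A i l * (B l t * v t))"
    by (simp add: mat_vec_def sum_distrib_left)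
  also have "\<dots> = (\<Sum>t<m. \<Sum>l<n. A i l * (B l t * v t))" by (rule sum.swap)
  also have "\<dots> = mat_vec m (mat_mult n A B) v i"
    by (simp add: mat_vec_def mat_mult_def sum_distrib_right mult.assoc)
  finally show "mat_vec n A (mat_vec m B v) i = mat_vec m (mat_mult n A B) v i" .
qed

lemma mat_vec_add: "mat_vec d A (\<lambda>i. v i + w i) = (\<lambda>i. mat_vec d A v i + mat_vec d A w i)"
  by (simp add: mat_vec_def algebra_simps sum.distrib)

lemma mat_vec_scale: "mat_vec d A (\<lambda>i. c * v i) = (\<lambda>i. c * mat_vec d A v i)"
  by (simp add: mat_vec_def algebra_simps sum_distrib_left)

lemma mat_vec_diff: "mat_vec d A (\<lambda>i. v i - w i) = (\<lambda>i. mat_vec d A v i - mat_vec d A w i)"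
  by (simp add: mat_vec_def algebra_simps sum_subtractf)

lemma mat_vec_zero: "mat_vec d A (\<lambda>_. 0) = (\<lambda>_. 0)"
  by (simp add: mat_vec_def)

lemma unit_fun_in_cvec: "k < d \<Longrightarrow> unit_fun k \<in> cvec d"
  by (auto simp: unit_fun_def cvec_def)

lemma mat_vec_unit_fun: "k < d \<Longrightarrow> mat_vec d M (unit_fun k) = (\<lambda>i. M i k)"
proof
  fix i assume k: "k < d"
  have "mat_vec d M (unit_fun k) i = (\<Sum>l\<in>{k}. M i l * unit_fun k l)"
    unfolding mat_vec_def by (rule sum.mono_neutral_right) (use k in \<open>auto simp: unit_fun_def\<close>)
  then show "mat_vec d M (unit_fun k) i = M i k" by (simp add: unit_fun_def)
qed

lemma mat_vec_in_cvec: "\<forall>i k. e \<le> i \<longrightarrow> M i k = 0 \<Longrightarrow> mat_vec d M v \<in> cvec e"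
  by (auto simp: mat_vec_def cvec_def)

lemma mat_vec_mat_id: "v \<in> cvec d \<Longrightarrow> mat_vec d (mat_id d) v = v"
proof
  fix i assume v: "v \<in> cvec d"
  show "mat_vec d (mat_id d) v i = v i"
  proof (cases "i < d")
    case True
    have "mat_vec d (mat_id d) v i = (\<Sum>l\<in>{i}. mat_id d i l * v l)"
      unfolding mat_vec_def by (rule sum.mono_neutral_right) (use True in \<open>auto simp: mat_id_def\<close>)
    then show ?thesis using True by (simp add: mat_id_def)
  qed (use v in \<open>simp add: mat_vec_def mat_id_def cvec_def\<close>)
qed

lemma mat_mult_mat_id_right:
  assumes "\<forall>i k. d \<le> k \<longrightarrow> A i k = 0"
  shows "mat_mult d A (mat_id d) = A"
proof (intro ext)
  fix i k
  show "mat_mult d A (mat_id d) i k = A i k"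
  proof (cases "k < d")
    case True
    have "mat_mult d A (mat_id d) i k = (\<Sum>l\<in>{k}. A i l * mat_id d l k)"
      unfolding mat_mult_def by (rule sum.mono_neutral_right) (use True in \<open>auto simp: mat_id_def\<close>)
    then show ?thesis using True by (simp add: mat_id_def)
  qed (use assms in \<open>simp add: mat_mult_def mat_id_def\<close>)
qed

lemma mat_mult_mat_id_left:
  assumes "\<forall>i k. d \<le> i \<longrightarrow> A i k = 0"
  shows "mat_mult d (mat_id d) A = A"
proof (intro ext)
  fix i k
  show "mat_mult d (mat_id d) A i k = A i k"
  proof (cases "i < d")
    case True
    have "mat_mult d (mat_id d) A i k = (\<Sum>l\<in>{i}. mat_id d i l * A l k)"
      unfolding mat_mult_def by (rule sum.mono_neutral_right) (use True in \<open>auto simp: mat_id_def\<close>)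
    then show ?thesis using True by (simp add: mat_id_def)
  qed (use assms in \<open>simp add: mat_mult_def mat_id_def\<close>)
qed

definition invariant_subspace :: "'g set \<Rightarrow> nat \<Rightarrow> ('g \<Rightarrow> nat \<Rightarrow> nat \<Rightarrow> complex)
    \<Rightarrow> (nat \<Rightarrow> complex) set \<Rightarrow> bool" where
  "invariant_subspace H d \<rho> W \<longleftrightarrow> W \<subseteq> cvec d \<and> (\<lambda>_. 0) \<in> W \<and>
     (\<forall>v\<in>W. \<forall>w\<in>W. (\<lambda>i. v i + w i) \<in> W) \<and> (\<forall>c. \<forall>v\<in>W. (\<lambda>i. c * v i) \<in> W) \<and>
     (\<forall>h\<in>H. \<forall>v\<in>W. mat_vec d (\<rho> h) v \<in> W)"

lemma irreducible_mrepD: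
  assumes "irreducible_mrep G H (d, \<rho>)"
  shows "0 < d" "\<And>h i k. h \<in> H \<Longrightarrow> d \<le> i \<or> d \<le> k \<Longrightarrow> \<rho> h i k = 0"
    "\<rho> \<one>\<^bsub>G\<^esub> = mat_id d"
    "\<And>h1 h2. h1 \<in> H \<Longrightarrow> h2 \<in> H \<Longrightarrow> \<rho> (h1 \<otimes>\<^bsub>G\<^esub> h2) = mat_mult d (\<rho> h1) (\<rho> h2)"
    "\<And>W. invariant_subspace H d \<rho> W \<Longrightarrow> W = {\<lambda>_. 0} \<or> W = cvec d"
  using assms unfolding irreducible_mrep_def is_mrep_def Let_def invariant_subspace_def by auto

lemma irreducible_mrep_mat_vec_in_cvec:
  assumes "irreducible_mrep G H (d, \<rho>)" "h \<in> H"
  shows "mat_vec d (\<rho> h) v \<in> cvec d"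
  by (rule mat_vec_in_cvec) (use irreducible_mrepD(2)[OF assms] in auto)

definition intertwines :: "'g set \<Rightarrow> nat \<Rightarrow> ('g \<Rightarrow> nat \<Rightarrow> nat \<Rightarrow> complex)
    \<Rightarrow> nat \<Rightarrow> ('g \<Rightarrow> nat \<Rightarrow> nat \<Rightarrow> complex) \<Rightarrow> (nat \<Rightarrow> nat \<Rightarrow> complex) \<Rightarrow> bool" where
  "intertwines H e \<sigma> d \<rho> M \<longleftrightarrow> (\<forall>i k. e \<le> i \<or> d \<le> k \<longrightarrow> M i k = 0)
     \<and> (\<forall>h\<in>H. mat_mult e (\<sigma> h) M = mat_mult d M (\<rho> h))"

lemma invariant_subspace_kernel:
  assumes irr: "irreducible_mrep G H (d, \<rho>)" and M: "intertwines H e \<sigma> d \<rho> M"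
  shows "invariant_subspace H d \<rho> {w \<in> cvec d. mat_vec d M w = (\<lambda>_. 0)}"
  unfolding invariant_subspace_def
proof (intro conjI ballI allI)
  fix h w assume h: "h \<in> H" and w: "w \<in> {w \<in> cvec d. mat_vec d M w = (\<lambda>_. 0)}"
  have "mat_vec d M (mat_vec d (\<rho> h) w) = mat_vec e (\<sigma> h) (mat_vec d M w)"
    using M h by (simp add: mat_vec_mat_mult intertwines_def)
  then show "mat_vec d (\<rho> h) w \<in> {w \<in> cvec d. mat_vec d M w = (\<lambda>_. 0)}"
    using w irreducible_mrep_mat_vec_in_cvec[OF irr h] by (simp add: mat_vec_zero)
qed (auto simp: cvec_def mat_vec_zero mat_vec_add mat_vec_scale)

lemma invariant_subspace_image:
  assumes irr: "irreducible_mrep G H (d, \<rho>)" and M: "intertwines H e \<sigma> d \<rho> M"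
  shows "invariant_subspace H e \<sigma> {mat_vec d M v | v. v \<in> cvec d}"
  unfolding invariant_subspace_def
proof (intro conjI ballI allI)
  show "{mat_vec d M v | v. v \<in> cvec d} \<subseteq> cvec e"
    using M mat_vec_in_cvec by (auto simp: intertwines_def)
  show "(\<lambda>_. 0) \<in> {mat_vec d M v | v. v \<in> cvec d}"
    using mat_vec_zero by (auto simp: cvec_def intro!: exI[of _ "\<lambda>_. 0"])
next
  fix a b assume "a \<in> {mat_vec d M v | v. v \<in> cvec d}" "b \<in> {mat_vec d M v | v. v \<in> cvec d}"
  then obtain v w where "v \<in> cvec d" "w \<in> cvec d" "a = mat_vec d M v" "b = mat_vec d M w" by auto
  then show "(\<lambda>i. a i + b i) \<in> {mat_vec d M v | v. v \<in> cvec d}"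
    by (intro CollectI exI[of _ "\<lambda>i. v i + w i"]) (auto simp: cvec_def mat_vec_add)
next
  fix c a assume "a \<in> {mat_vec d M v | v. v \<in> cvec d}"
  then obtain v where "v \<in> cvec d" "a = mat_vec d M v" by auto
  then show "(\<lambda>i. c * a i) \<in> {mat_vec d M v | v. v \<in> cvec d}"
    by (intro CollectI exI[of _ "\<lambda>i. c * v i"]) (auto simp: cvec_def mat_vec_scale)
next
  fix h a assume h: "h \<in> H" and "a \<in> {mat_vec d M v | v. v \<in> cvec d}"
  then obtain v where v: "v \<in> cvec d" "a = mat_vec d M v" by auto
  have "mat_vec e (\<sigma> h) a = mat_vec d M (mat_vec d (\<rho> h) v)"
    using v M h by (simp add: mat_vec_mat_mult intertwines_def)
  then show "mat_vec e (\<sigma> h) a \<in> {mat_vec d M v | v. v \<in> cvec d}"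
    using irreducible_mrep_mat_vec_in_cvec[OF irr h] by blast
qed

lemma intertwiner_zero_of_kernel:
  assumes irr: "irreducible_mrep G H (d, \<rho>)" and M: "intertwines H e \<sigma> d \<rho> M"
    and v: "v \<in> cvec d" "v \<noteq> (\<lambda>_. 0)" "mat_vec d M v = (\<lambda>_. 0)"
  shows "M i k = 0"
proof (cases "k < d")
  case True
  have "{w \<in> cvec d. mat_vec d M w = (\<lambda>_. 0)} = cvec d"
    using irreducible_mrepD(5)[OF irr invariant_subspace_kernel[OF irr M]] v by auto
  then have "unit_fun k \<in> {w \<in> cvec d. mat_vec d M w = (\<lambda>_. 0)}" using unit_fun_in_cvec[OF True] by simp
  then have "mat_vec d M (unit_fun k) i = 0" by simp
  then show ?thesis using mat_vec_unit_fun[OF True] by simp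
qed (use M in \<open>simp add: intertwines_def\<close>)

lemma intertwiner_surjective:
  assumes irr\<sigma>: "irreducible_mrep G H (e, \<sigma>)" and irr\<rho>: "irreducible_mrep G H (d, \<rho>)"
    and M: "intertwines H e \<sigma> d \<rho> M" and nz: "M i0 k0 \<noteq> 0" and w: "w \<in> cvec e"
  shows "\<exists>v\<in>cvec d. mat_vec d M v = w"
proof -
  let ?W = "{mat_vec d M v | v. v \<in> cvec d}"
  have k0: "k0 < d" using nz M by (meson intertwines_def not_le)
  have "mat_vec d M (unit_fun k0) \<in> ?W" using unit_fun_in_cvec[OF k0] by auto
  moreover have "mat_vec d M (unit_fun k0) \<noteq> (\<lambda>_. 0)"
    using mat_vec_unit_fun[OF k0] nz by (auto simp: fun_eq_iff)
  ultimately have "?W \<noteq> {\<lambda>_. 0}" by (metis singletonD)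
  then have "?W = cvec e"
    using irreducible_mrepD(5)[OF irr\<sigma> invariant_subspace_image[OF irr\<rho> M]] by simp
  with w have "w \<in> ?W" by simp
  then show ?thesis by auto
qed

lemma mat_mult_left_inverse_of_injective:
  assumes MQ: "mat_mult d M Q = mat_id e" and van: "\<forall>i k. e \<le> i \<or> d \<le> k \<longrightarrow> M i k = 0"
    and Qvan: "\<forall>l k. d \<le> l \<longrightarrow> Q l k = 0"
    and inj: "\<And>v. v \<in> cvec d \<Longrightarrow> mat_vec d M v = (\<lambda>_. 0) \<Longrightarrow> v = (\<lambda>_. 0)"
  shows "mat_mult e Q M = mat_id d"
proof (intro ext)
  fix l k show "mat_mult e Q M l k = mat_id d l k"
  proof (cases "k < d")
    case True
    define x where "x = (\<lambda>l. mat_mult e Q M l k)"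
    have x: "x = mat_vec e Q (mat_vec d M (unit_fun k))"
      unfolding x_def mat_vec_unit_fun[OF True] by (simp add: mat_mult_def mat_vec_def)
    have "mat_vec d M x = mat_vec e (mat_mult d M Q) (mat_vec d M (unit_fun k))"
      unfolding x by (rule mat_vec_mat_mult)
    also have "\<dots> = mat_vec d M (unit_fun k)"
      unfolding MQ by (rule mat_vec_mat_id) (use mat_vec_in_cvec van in blast)
    finally have "mat_vec d M (\<lambda>i. x i - unit_fun k i) = (\<lambda>_. 0)" by (simp add: mat_vec_diff)
    moreover have "(\<lambda>i. x i - unit_fun k i) \<in> cvec d"
      using mat_vec_in_cvec[OF Qvan] unit_fun_in_cvec[OF True] by (auto simp: x cvec_def)
    ultimately have "x l = unit_fun k l" using inj by (metis eq_iff_diff_eq_0)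
    then show ?thesis using True by (simp add: x_def unit_fun_def mat_id_def)
  qed (use van in \<open>simp add: mat_mult_def mat_id_def\<close>)
qed

text \<open>A right inverse Q of M is built column by column from preimages of unit vectors; it is
  also a left inverse since M is injective, and the dimensions agree by card_eq_of_inverse.\<close>
lemma schur_equiv:
  assumes irr\<sigma>: "irreducible_mrep G H (e, \<sigma>)" and irr\<rho>: "irreducible_mrep G H (d, \<rho>)"
    and M: "intertwines H e \<sigma> d \<rho> M" and nz: "M i0 k0 \<noteq> 0"
  shows "equiv_mrep H (d, \<rho>) (e, \<sigma>)"
proof -
  have van: "\<forall>i k. e \<le> i \<or> d \<le> k \<longrightarrow> M i k = 0" using M by (simp add: intertwines_def)
  obtain pre where pre: "\<And>k. k < e \<Longrightarrow> pre k \<in> cvec d \<and> mat_vec d M (pre k) = unit_fun k"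
    using intertwiner_surjective[OF irr\<sigma> irr\<rho> M nz unit_fun_in_cvec] by metis
  define Q where "Q = (\<lambda>l k. if k < e then pre k l else 0)"
  have Qvan: "\<forall>l k. d \<le> l \<longrightarrow> Q l k = 0" using pre by (auto simp: Q_def cvec_def)
  have MQ: "mat_mult d M Q = mat_id e"
  proof (intro ext)
    fix i k show "mat_mult d M Q i k = mat_id e i k"
    proof (cases "k < e")
      case True
      have "mat_mult d M Q i k = mat_vec d M (pre k) i"
        by (simp add: mat_mult_def mat_vec_def Q_def True)
      then show ?thesis using pre[OF True] True van by (auto simp: unit_fun_def mat_id_def)
    qed (simp add: mat_mult_def Q_def mat_id_def)
  qed
  have QM: "mat_mult e Q M = mat_id d"
    using mat_mult_left_inverse_of_injective[OF MQ van Qvan]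
      intertwiner_zero_of_kernel[OF irr\<rho> M, of _ i0 k0] nz by blast
  have "card {..<e} = card {..<d}"
  proof (rule card_eq_of_inverse[where A=M and A'=Q])
    fix i i' assume "i \<in> {..<e}" "i' \<in> {..<e}"
    then show "(\<Sum>k\<in>{..<d}. M i k * Q k i') = (if i = i' then 1 else 0)"
      using fun_cong[OF fun_cong[OF MQ, of i], of i'] by (auto simp: mat_mult_def mat_id_def)
  next
    fix k k' assume "k \<in> {..<d}" "k' \<in> {..<d}"
    then show "(\<Sum>i\<in>{..<e}. Q k i * M i k') = (if k = k' then 1 else 0)"
      using fun_cong[OF fun_cong[OF QM, of k], of k'] by (auto simp: mat_mult_def mat_id_def)
  qed auto
  then have "e = d" by simp
  moreover have "\<exists>P Q. mat_mult d P Q = mat_id d \<and> mat_mult d Q P = mat_id d \<and>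
      (\<forall>h\<in>H. mat_mult d P (\<rho> h) = mat_mult d (\<sigma> h) P)"
    by (rule exI[of _ M], rule exI[of _ Q]) (use MQ QM M \<open>e = d\<close> in \<open>simp add: intertwines_def\<close>)
  ultimately show ?thesis by (simp add: equiv_mrep_def)
qed

lemma eigenvector_exists:
  fixes M :: "nat \<Rightarrow> nat \<Rightarrow> complex"
  assumes d: "0 < d"
  shows "\<exists>c v. v \<in> cvec d \<and> v \<noteq> (\<lambda>_. 0) \<and> (\<forall>i<d. mat_vec d M v i = c * v i)"
proof -
  define A where "A = mat d d (\<lambda>(i, k). M i k)"
  have A: "A \<in> carrier_mat d d" by (simp add: A_def)
  from spectrum_non_empty[OF A d] obtain c where "c \<in> spectrum A" by auto
  then obtain w where w: "w \<in> carrier_vec d" "w \<noteq> 0\<^sub>v d" "A *\<^sub>v w = c \<cdot>\<^sub>v w"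
    unfolding spectrum_def eigenvalue_def eigenvector_def using A by auto
  define v where "v = (\<lambda>i. if i < d then w $ i else 0)"
  have "v \<noteq> (\<lambda>_. 0)"
  proof
    assume "v = (\<lambda>_. 0)"
    then have "w = 0\<^sub>v d" using w(1) by (intro eq_vecI) (auto simp: v_def fun_eq_iff, metis)
    with w(2) show False by simp
  qed
  moreover have "mat_vec d M v i = c * v i" if i: "i < d" for i
  proof -
    have "(A *\<^sub>v w) $ i = (\<Sum>l<d. M i l * w $ l)"
      using i w(1) by (simp add: A_def scalar_prod_def atLeast0LessThan)
    also have "\<dots> = mat_vec d M v i" by (simp add: mat_vec_def v_def)
    finally show ?thesis using w(3) i w(1) by (simp add: v_def)
  qed
  moreover have "v \<in> cvec d" by (simp add: v_def cvec_def)
  ultimately show ?thesis by blast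
qed

lemma schur_scalar:
  assumes irr: "irreducible_mrep G H (d, \<rho>)" and M: "intertwines H d \<rho> d \<rho> M"
  shows "\<exists>c. \<forall>i k. M i k = c * mat_id d i k"
proof -
  obtain c v where v: "v \<in> cvec d" "v \<noteq> (\<lambda>_. 0)" "\<forall>i<d. mat_vec d M v i = c * v i"
    using eigenvector_exists[OF irreducible_mrepD(1)[OF irr]] by blast
  define N where "N = (\<lambda>i k. M i k - c * mat_id d i k)"
  have N: "intertwines H d \<rho> d \<rho> N"
    unfolding intertwines_def
  proof (intro conjI ballI)
    show "\<forall>i k. d \<le> i \<or> d \<le> k \<longrightarrow> N i k = 0"
      using M by (auto simp: N_def mat_id_def intertwines_def)
    fix h assume h: "h \<in> H"
    have id: "mat_mult d (\<rho> h) (mat_id d) = mat_mult d (mat_id d) (\<rho> h)"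
      using mat_mult_mat_id_right mat_mult_mat_id_left irreducible_mrepD(2)[OF irr h] by metis
    have "mat_mult d (\<rho> h) N = (\<lambda>i k. mat_mult d (\<rho> h) M i k - c * mat_mult d (\<rho> h) (mat_id d) i k)"
      by (simp add: N_def mat_mult_def algebra_simps sum_subtractf sum_distrib_left)
    also have "\<dots> = (\<lambda>i k. mat_mult d M (\<rho> h) i k - c * mat_mult d (mat_id d) (\<rho> h) i k)"
      using M h id by (simp add: intertwines_def)
    also have "\<dots> = mat_mult d N (\<rho> h)"
      by (simp add: N_def mat_mult_def algebra_simps sum_subtractf sum_distrib_left)
    finally show "mat_mult d (\<rho> h) N = mat_mult d N (\<rho> h)" .
  qed
  have "mat_vec d N v = (\<lambda>_. 0)"
  proof
    fix i
    have "mat_vec d N v i = mat_vec d M v i - c * mat_vec d (mat_id d) v i"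
      by (simp add: N_def mat_vec_def algebra_simps sum_subtractf sum_distrib_left)
    also have "\<dots> = mat_vec d M v i - c * v i" using mat_vec_mat_id[OF v(1)] by simp
    finally have "mat_vec d N v i = mat_vec d M v i - c * v i" .
    moreover have "mat_vec d M v i = c * v i"
    proof (cases "i < d")
      case False
      then show ?thesis using M v(1) by (simp add: mat_vec_def cvec_def intertwines_def)
    qed (use v(3) in simp)
    ultimately show "mat_vec d N v i = 0" by simp
  qed
  then have "\<And>i k. N i k = 0" using intertwiner_zero_of_kernel[OF irr N v(1,2)] by blast
  then show ?thesis by (auto simp: N_def intro!: exI[of _ c])
qed

section \<open>Finitely many irreducible representations\<close>

lemma complete_irrepsD:
  assumes "complete_irreps G H R"
  shows "\<And>r. r \<in> R \<Longrightarrow> irreducible_mrep G H r"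
    "\<And>r s. r \<in> R \<Longrightarrow> s \<in> R \<Longrightarrow> equiv_mrep H r s \<Longrightarrow> r = s"
  using assms unfolding complete_irreps_def by auto

context group
begin

lemma bij_betw_mult_left_subgroup:
  assumes H: "subgroup H G" and g: "g \<in> H"
  shows "bij_betw (\<lambda>h. g \<otimes> h) H H"
proof -
  have gc: "g \<in> carrier G" using subgroup.mem_carrier[OF H g] .
  show ?thesis unfolding bij_betw_def
  proof
    show "inj_on (\<lambda>h. g \<otimes> h) H"
      using gc subgroup.mem_carrier[OF H] by (auto simp: inj_on_def)
    show "(\<lambda>h. g \<otimes> h) ` H = H"
    proof (intro equalityI subsetI)
      fix x assume "x \<in> (\<lambda>h. g \<otimes> h) ` H" then show "x \<in> H" using H g by (auto intro: subgroup.m_closed)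
    next
      fix x assume x: "x \<in> H"
      have "x = g \<otimes> (inv g \<otimes> x)" using gc subgroup.mem_carrier[OF H x] by (simp add: m_assoc[symmetric])
      moreover have "inv g \<otimes> x \<in> H" using H g x by (auto intro: subgroup.m_closed subgroup.m_inv_closed)
      ultimately show "x \<in> (\<lambda>h. g \<otimes> h) ` H" by blast
    qed
  qed
qed

lemma irreducible_mrep_inv:
  assumes H: "subgroup H G" and irr: "irreducible_mrep G H (d, \<rho>)" and h: "h \<in> H"
  shows "mat_mult d (\<rho> (inv h)) (\<rho> h) = mat_id d"
proof -
  have "mat_mult d (\<rho> (inv h)) (\<rho> h) = \<rho> (inv h \<otimes> h)"
    using irreducible_mrepD(4)[OF irr subgroup.m_inv_closed[OF H h] h] by simp
  also have "\<dots> = mat_id d"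
    using subgroup.mem_carrier[OF H h] irreducible_mrepD(3)[OF irr] by simp
  finally show ?thesis .
qed

text \<open>Averaging the rank one matrix sigma(h) E rho(h)^-1 over H, with E the (0,0) matrix
  unit, yields an intertwiner; Schur's lemma then gives the orthogonality relations for the
  (0,0) matrix coefficients.\<close>
lemma intertwines_average:
  assumes H: "subgroup H G"
    and irr\<sigma>: "irreducible_mrep G H (e, \<sigma>)" and irr\<rho>: "irreducible_mrep G H (d, \<rho>)"
  shows "intertwines H e \<sigma> d \<rho> (\<lambda>i k. \<Sum>h\<in>H. \<sigma> h i 0 * \<rho> (inv h) 0 k)"
  unfolding intertwines_def
proof (intro conjI ballI ext)
  show "\<forall>i k. e \<le> i \<or> d \<le> k \<longrightarrow> (\<Sum>h\<in>H. \<sigma> h i 0 * \<rho> (inv h) 0 k) = 0"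
    using irreducible_mrepD(2)[OF irr\<sigma>] irreducible_mrepD(2)[OF irr\<rho>] subgroup.m_inv_closed[OF H]
    by (auto intro!: sum.neutral)
  fix g i k assume g: "g \<in> H"
  let ?P = "\<lambda>i k. \<Sum>h\<in>H. \<sigma> h i 0 * \<rho> (inv h) 0 k"
  have gc: "g \<in> carrier G" using subgroup.mem_carrier[OF H g] .
  have "mat_mult e (\<sigma> g) ?P i k = (\<Sum>h\<in>H. (\<Sum>l<e. \<sigma> g i l * \<sigma> h l 0) * \<rho> (inv h) 0 k)"
    unfolding mat_mult_def by (simp add: sum_distrib_left sum_distrib_right sum.swap[of _ H] mult.assoc)
  also have "\<dots> = (\<Sum>h\<in>H. \<sigma> (g \<otimes> h) i 0 * \<rho> (inv h) 0 k)"
    using irreducible_mrepD(4)[OF irr\<sigma> g] by (simp add: mat_mult_def)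
  also have "\<dots> = (\<Sum>h\<in>H. \<sigma> (g \<otimes> h) i 0 * \<rho> (inv (g \<otimes> h) \<otimes> g) 0 k)"
    by (rule sum.cong) (use gc subgroup.mem_carrier[OF H] in \<open>auto simp: inv_mult_group m_assoc\<close>)
  also have "\<dots> = (\<Sum>h\<in>H. \<sigma> h i 0 * \<rho> (inv h \<otimes> g) 0 k)"
    using sum.reindex_bij_betw[OF bij_betw_mult_left_subgroup[OF H g],
        of "\<lambda>h. \<sigma> h i 0 * \<rho> (inv h \<otimes> g) 0 k"]
    by simp
  also have "\<dots> = (\<Sum>h\<in>H. \<sigma> h i 0 * (\<Sum>l<d. \<rho> (inv h) 0 l * \<rho> g l k))"
    by (rule sum.cong)
       (use irreducible_mrepD(4)[OF irr\<rho> _ g] subgroup.m_inv_closed[OF H] in \<open>auto simp: mat_mult_def\<close>)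
  also have "\<dots> = mat_mult d ?P (\<rho> g) i k"
    unfolding mat_mult_def by (simp add: sum_distrib_left sum_distrib_right sum.swap[of _ H] mult.assoc)
  finally show "mat_mult e (\<sigma> g) ?P i k = mat_mult d ?P (\<rho> g) i k" .
qed

lemma irreps_orthogonal:
  assumes H: "subgroup H G" and R: "complete_irreps G H R"
    and r: "(d, \<rho>) \<in> R" and s: "(e, \<sigma>) \<in> R" and ne: "(d, \<rho>) \<noteq> (e, \<sigma>)"
  shows "(\<Sum>h\<in>H. \<sigma> h 0 0 * \<rho> (inv h) 0 0) = 0"
proof (rule ccontr)
  assume "(\<Sum>h\<in>H. \<sigma> h 0 0 * \<rho> (inv h) 0 0) \<noteq> 0"
  then have "equiv_mrep H (d, \<rho>) (e, \<sigma>)"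
    using schur_equiv[OF _ _ intertwines_average[OF H]] complete_irrepsD(1)[OF R] r s by blast
  then show False using complete_irrepsD(2)[OF R r s] ne by simp
qed

lemma irrep_self_product_nonzero:
  assumes H: "subgroup H G" and fin: "finite H" and irr: "irreducible_mrep G H (d, \<rho>)"
  shows "(\<Sum>h\<in>H. \<rho> h 0 0 * \<rho> (inv h) 0 0) \<noteq> 0"
proof -
  have d: "0 < d" using irreducible_mrepD(1)[OF irr] .
  define P where "P = (\<lambda>i k. \<Sum>h\<in>H. \<rho> h i 0 * \<rho> (inv h) 0 k)"
  obtain c where c: "\<forall>i k. P i k = c * mat_id d i k"
    using schur_scalar[OF irr intertwines_average[OF H irr irr]] by (auto simp: P_def)
  have "(\<Sum>i<d. P i i) = (\<Sum>h\<in>H. mat_mult d (\<rho> (inv h)) (\<rho> h) 0 0)"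
    unfolding P_def mat_mult_def by (subst sum.swap) (simp add: mult.commute)
  also have "\<dots> = of_nat (card H)"
    using irreducible_mrep_inv[OF H irr] d by (simp add: mat_id_def)
  finally have "of_nat d * c = of_nat (card H)" using c by (simp add: mat_id_def)
  moreover have "card H \<noteq> 0" using fin subgroup.one_closed[OF H] by (auto simp: card_eq_0_iff)
  ultimately have "c \<noteq> 0" by auto
  then show ?thesis using c d by (simp add: P_def mat_id_def)
qed

text \<open>By the orthogonality relations the functions h \<mapsto> rho(h)(0,0), for rho in R, are
  linearly independent in the finite-dimensional space of functions on H.\<close>
lemma complete_irreps_finite:
  assumes H: "subgroup H G" and fin: "finite H" and R: "complete_irreps G H R"
  shows "finite R"
proof -
  define f where "f r = (\<lambda>h. if h \<in> H then snd r h 0 0 else 0 :: complex)" for r :: "'a mrep"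
  define L where "L s w = (\<Sum>h\<in>H. w h * f s (inv h))" for s w
  have L_f: "L s (f r) = (\<Sum>h\<in>H. snd r h 0 0 * snd s (inv h) 0 0)" for r s
    unfolding L_def f_def using subgroup.m_inv_closed[OF H] by (auto intro!: sum.cong)
  have L_ne: "L s (f r) = 0" if "r \<in> R" "s \<in> R" "r \<noteq> s" for r s
    using irreps_orthogonal[OF H R, of "fst s" "snd s" "fst r" "snd r"] that L_f[of s r] by simp
  have L_eq: "L s (f s) \<noteq> 0" if "s \<in> R" for s
    using irrep_self_product_nonzero[OF H fin, of "fst s" "snd s"] complete_irrepsD(1)[OF R that]
      L_f[of s s] by simp
  have inj: "inj_on f R"
    by (rule inj_onI) (metis L_eq L_ne)
  have span: "f ` R \<subseteq> function_space.span (unit_fun ` H)"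
    using in_span_unit_funs[OF fin] by (auto simp: f_def)
  have indep: "function_space.independent (f ` R)"
    unfolding function_space.independent_explicit_module
  proof (intro allI impI)
    fix T u v
    assume T: "finite T" "T \<subseteq> f ` R" and zero: "(\<Sum>v\<in>T. (\<lambda>x. u v * v x)) = 0" and v: "v \<in> T"
    obtain s where s: "s \<in> R" "v = f s" using T v by auto
    have "L s (\<Sum>w\<in>T. (\<lambda>x. u w * w x)) = (\<Sum>w\<in>T. u w * L s w)"
      unfolding L_def sum_apply
      by (simp add: sum_distrib_left sum_distrib_right sum.swap[of _ H] mult.assoc)
    also have "\<dots> = (\<Sum>w\<in>{v}. u w * L s w)"
    proof (rule sum.mono_neutral_right)
      show "\<forall>w\<in>T - {v}. u w * L s w = 0"
      proof
        fix w assume w: "w \<in> T - {v}"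
        then obtain r where r: "r \<in> R" "w = f r" using T by auto
        with w s have "r \<noteq> s" by auto
        then show "u w * L s w = 0" using L_ne[OF r(1) s(1)] r by simp
      qed
    qed (use T v in auto)
    finally have "u v * L s v = 0" using zero by (simp add: L_def)
    then show "u v = 0" using L_eq[OF s(1)] s by simp
  qed
  have "finite (f ` R)" using function_space.independent_span_bound[OF _ indep span] fin by auto
  then show ?thesis using inj finite_image_iff by blast
qed

end

section \<open>Inverse matrices that respect a labelling\<close>

definition inverse_mats :: "nat \<Rightarrow> nat \<Rightarrow> (nat \<Rightarrow> nat \<Rightarrow> complex) \<Rightarrow> (nat \<Rightarrow> nat \<Rightarrow> complex) \<Rightarrow> bool" where
  "inverse_mats N M A A' \<longleftrightarrow>
     (\<forall>i<N. \<forall>i'<N. (\<Sum>k<M. A i k * A' k i') = (if i = i' then 1 else 0)) \<and>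
     (\<forall>k<M. \<forall>k'<M. (\<Sum>i<N. A' k i * A i k') = (if k = k' then 1 else 0))"

definition respects_labels :: "nat \<Rightarrow> nat \<Rightarrow> (nat \<Rightarrow> nat \<Rightarrow> complex)
    \<Rightarrow> (nat \<Rightarrow> 'c) \<Rightarrow> (nat \<Rightarrow> 'c) \<Rightarrow> bool" where
  "respects_labels N M A lbl lbl' \<longleftrightarrow> (\<forall>i<N. \<forall>k<M. A i k \<noteq> 0 \<longrightarrow> lbl i = lbl' k)"

lemma change_basis_inverse_mats:
  assumes "is_basis Y B" "is_basis Y B'"
  shows "inverse_mats (length B) (length B') (change_basis B B') (change_basis B' B)"
  using change_basis_inverse[OF assms] change_basis_inverse[OF assms(2,1)] is_basis_length_eq[OF assms]
  by (simp add: inverse_mats_def)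

lemma card_label_class_eq:
  assumes inv: "inverse_mats N M A A'"
    and A: "respects_labels N M A lbl lbl'" and A': "respects_labels M N A' lbl' lbl"
  shows "card {i. i < N \<and> lbl i = c} = card {k. k < M \<and> lbl' k = c}"
proof (rule card_eq_of_inverse[where A=A and A'=A'])
  fix i i' assume i: "i \<in> {i. i < N \<and> lbl i = c}" and i': "i' \<in> {i. i < N \<and> lbl i = c}"
  have "(\<Sum>k<M. A i k * A' k i') = (\<Sum>k\<in>{k. k < M \<and> lbl' k = c}. A i k * A' k i')"
    by (rule sum.mono_neutral_right) (use A' i' in \<open>auto simp: respects_labels_def\<close>)
  then show "(\<Sum>k\<in>{k. k < M \<and> lbl' k = c}. A i k * A' k i') = (if i = i' then 1 else 0)"
    using inv i i' by (simp add: inverse_mats_def)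
next
  fix k k' assume k: "k \<in> {k. k < M \<and> lbl' k = c}" and k': "k' \<in> {k. k < M \<and> lbl' k = c}"
  have "(\<Sum>i<N. A' k i * A i k') = (\<Sum>i\<in>{i. i < N \<and> lbl i = c}. A' k i * A i k')"
    by (rule sum.mono_neutral_right) (use A k' in \<open>auto simp: respects_labels_def\<close>)
  then show "(\<Sum>i\<in>{i. i < N \<and> lbl i = c}. A' k i * A i k') = (if k = k' then 1 else 0)"
    using inv k k' by (simp add: inverse_mats_def)
qed auto

lemma nnz_le_sum_label_class_squares:
  assumes inv: "inverse_mats N M A A'"
    and A: "respects_labels N M A lbl lbl'" and A': "respects_labels M N A' lbl' lbl"
    and F: "finite F" "\<And>i. i < N \<Longrightarrow> lbl i \<in> F"
  shows "nnz N M A \<le> (\<Sum>c\<in>F. (card {i. i < N \<and> lbl i = c})\<^sup>2)"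
proof -
  let ?rows = "\<lambda>c. {i. i < N \<and> lbl i = c}" and ?cols = "\<lambda>c. {k. k < M \<and> lbl' k = c}"
  have "{(i, k). i < N \<and> k < M \<and> A i k \<noteq> 0} \<subseteq> (\<Union>c\<in>F. ?rows c \<times> ?cols c)"
    using A F(2) by (fastforce simp: respects_labels_def)
  then have "nnz N M A \<le> card (\<Union>c\<in>F. ?rows c \<times> ?cols c)"
    unfolding nnz_def by (intro card_mono) (use F(1) in auto)
  also have "\<dots> \<le> (\<Sum>c\<in>F. card (?rows c \<times> ?cols c))" by (rule card_UN_le[OF F(1)])
  also have "\<dots> = (\<Sum>c\<in>F. (card (?rows c))\<^sup>2)"
    using card_label_class_eq[OF inv A A'] by (simp add: card_cartesian_product power2_eq_square)
  finally show ?thesis .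
qed

lemma nnz_eq_sum_column_nnz: "nnz N M A = (\<Sum>k<M. card {i. i < N \<and> A i k \<noteq> 0})"
proof -
  have "{(i, k). i < N \<and> k < M \<and> A i k \<noteq> 0} = (\<Union>k<M. {i. i < N \<and> A i k \<noteq> 0} \<times> {k})"
    by auto
  then have "card {(i, k). i < N \<and> k < M \<and> A i k \<noteq> 0}
      = card (\<Union>k<M. {i. i < N \<and> A i k \<noteq> 0} \<times> {k})" by simp
  also have "\<dots> = (\<Sum>k<M. card ({i. i < N \<and> A i k \<noteq> 0} \<times> {k}))"
    by (rule card_UN_disjoint) auto
  finally show ?thesis by (simp add: nnz_def card_cartesian_product)
qed

lemma column_nnz_le_label_class:
  assumes "respects_labels N M A lbl lbl'" "k < M"
  shows "card {i. i < N \<and> A i k \<noteq> 0} \<le> card {i. i < N \<and> lbl i = lbl' k}"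
  by (rule card_mono) (use assms in \<open>auto simp: respects_labels_def\<close>)

section \<open>Multiplicities\<close>

definition transforms_by :: "('g, 'm) monoid_scheme \<Rightarrow> 'x set \<Rightarrow> ('g \<Rightarrow> 'x \<Rightarrow> 'x) \<Rightarrow> 'g set
    \<Rightarrow> nat \<Rightarrow> ('g \<Rightarrow> nat \<Rightarrow> nat \<Rightarrow> complex) \<Rightarrow> (nat \<Rightarrow> 'x \<Rightarrow> complex) \<Rightarrow> bool" where
  "transforms_by G X \<phi> H d \<rho> v \<longleftrightarrow>
     (\<forall>h\<in>H. \<forall>q<d. fun_act G X \<phi> h (v q) = (\<lambda>x. \<Sum>p<d. \<rho> h p q * v p x))"

lemma fun_act_lin_comb:
  "fun_act G X \<phi> h (lin_comb B c) = (\<lambda>x. \<Sum>i<length B. c i * fun_act G X \<phi> h (B ! i) x)"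
  by (auto simp: fun_act_def lin_comb_def)

lemma coord_transforms_by:
  assumes B: "is_basis Y B" and ad: "adapted_blocks G X \<phi> H B bs"
    and vY: "\<And>q. q < d \<Longrightarrow> v q \<in> CV Y" and v: "transforms_by G X \<phi> H d \<rho> v"
    and h: "h \<in> H" and q: "q < d" and i: "i < length B"
  shows "(\<Sum>k<length B. bdiag bs h i k * coord B (v q) k) = (\<Sum>p<d. \<rho> h p q * coord B (v p) i)"
proof -
  let ?N = "length B"
  define c where "c p = coord B (v p)" for p
  have cv: "v p = lin_comb B (c p)" if "p < d" for p
    unfolding c_def by (rule lin_comb_coord(1)[OF B vY[OF that]])
  have "fun_act G X \<phi> h (v q) = lin_comb B (\<lambda>i. \<Sum>k<?N. bdiag bs h i k * c q k)"
  proof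
    fix x
    have "fun_act G X \<phi> h (v q) x = (\<Sum>k<?N. c q k * fun_act G X \<phi> h (B ! k) x)"
      by (subst cv[OF q]) (simp add: fun_act_lin_comb)
    also have "\<dots> = (\<Sum>k<?N. c q k * (\<Sum>i<?N. bdiag bs h i k * (B ! i) x))"
      using ad h by (auto simp: adapted_blocks_def lin_comb_def intro!: sum.cong)
    also have "\<dots> = (\<Sum>k<?N. \<Sum>i<?N. c q k * (bdiag bs h i k * (B ! i) x))"
      by (simp add: sum_distrib_left)
    also have "\<dots> = (\<Sum>i<?N. \<Sum>k<?N. c q k * (bdiag bs h i k * (B ! i) x))"
      by (rule sum.swap)
    also have "\<dots> = lin_comb B (\<lambda>i. \<Sum>k<?N. bdiag bs h i k * c q k) x"
      unfolding lin_comb_def sum_distrib_right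
      by (auto intro!: sum.cong simp: mult.commute mult.left_commute)
    finally show "fun_act G X \<phi> h (v q) x = lin_comb B (\<lambda>i. \<Sum>k<?N. bdiag bs h i k * c q k) x" .
  qed
  moreover have "fun_act G X \<phi> h (v q) = lin_comb B (\<lambda>i. \<Sum>p<d. \<rho> h p q * c p i)"
  proof
    fix x
    have "fun_act G X \<phi> h (v q) x = (\<Sum>p<d. \<rho> h p q * (\<Sum>i<?N. c p i * (B ! i) x))"
      using v h q cv by (simp add: transforms_by_def lin_comb_def)
    also have "\<dots> = (\<Sum>p<d. \<Sum>i<?N. \<rho> h p q * (c p i * (B ! i) x))"
      by (simp add: sum_distrib_left)
    also have "\<dots> = (\<Sum>i<?N. \<Sum>p<d. \<rho> h p q * (c p i * (B ! i) x))"
      by (rule sum.swap)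
    also have "\<dots> = lin_comb B (\<lambda>i. \<Sum>p<d. \<rho> h p q * c p i) x"
      unfolding lin_comb_def sum_distrib_right
      by (auto intro!: sum.cong simp: mult.commute mult.left_commute)
    finally show "fun_act G X \<phi> h (v q) x = lin_comb B (\<lambda>i. \<Sum>p<d. \<rho> h p q * c p i) x" .
  qed
  ultimately have "lin_comb B (\<lambda>i. \<Sum>k<?N. bdiag bs h i k * c q k)
      = lin_comb B (\<lambda>i. \<Sum>p<d. \<rho> h p q * c p i)" by simp
  from is_basis_coeff_unique[OF B this i] show ?thesis by (simp add: c_def)
qed

lemma intertwines_coord_block:
  assumes B: "is_basis Y B" and ad: "adapted_blocks G X \<phi> H B bs"
    and vY: "\<And>q. q < d \<Longrightarrow> v q \<in> CV Y" and v: "transforms_by G X \<phi> H d \<rho> v"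
    and a: "a < length bs" and ba: "bs ! a = (e, \<sigma>)"
    and irr\<sigma>: "irreducible_mrep G H (e, \<sigma>)" and irr\<rho>: "irreducible_mrep G H (d, \<rho>)"
  shows "intertwines H e \<sigma> d \<rho>
    (\<lambda>i q. if i < e \<and> q < d then coord B (v q) (block_start (map fst bs) a + i) else 0)"
  (is "intertwines H e \<sigma> d \<rho> ?M")
  unfolding intertwines_def
proof (intro conjI ballI ext)
  fix h i q assume h: "h \<in> H"
  let ?ds = "map fst bs"
  let ?s = "block_start ?ds a"
  have N: "length B = sum_list ?ds" using ad by (simp add: adapted_blocks_def)
  have a': "a < length ?ds" "?ds ! a = e" using a ba by auto
  have in_block: "?s + l < sum_list ?ds" "block_of ?ds (?s + l) = a" "pos_in_block ?ds (?s + l) = l"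
    if "l < e" for l
    using block_start_add_less[OF a'(1)] block_index_start[OF a'(1)] that a' by auto
  show "mat_mult e (\<sigma> h) ?M i q = mat_mult d ?M (\<rho> h) i q"
  proof (cases "i < e \<and> q < d")
    case True
    have "mat_mult e (\<sigma> h) ?M i q
        = (\<Sum>l<?ds ! a. bdiag bs h (?s + i) (?s + l) * coord B (v q) (?s + l))"
      using True in_block a' ba bdiag_block[of "?s + i" bs "?s + _" h]
      by (auto simp: mat_mult_def intro!: sum.cong)
    also have "\<dots> = (\<Sum>k<length B. bdiag bs h (?s + i) k * coord B (v q) k)"
      unfolding N
      by (rule sum_over_block[OF a'(1), symmetric])
         (use in_block[OF conjunct1[OF True]] bdiag_block[of "?s + i" bs _ h] in simp)
    also have "\<dots> = (\<Sum>p<d. \<rho> h p q * coord B (v p) (?s + i))"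
      using coord_transforms_by[OF B ad vY v h] True in_block(1) N by simp
    also have "\<dots> = mat_mult d ?M (\<rho> h) i q"
      using True by (auto simp: mat_mult_def mult.commute intro!: sum.cong)
    finally show ?thesis .
  qed (use irreducible_mrepD(2)[OF irr\<sigma> h] irreducible_mrepD(2)[OF irr\<rho> h] in
       \<open>auto simp: mat_mult_def\<close>)
qed auto

text \<open>Schur's lemma, applied to the coordinates of v in the block of B containing i.\<close>
lemma block_label_of_coord_nonzero:
  assumes R: "complete_irreps G H R"
    and B: "is_basis Y B" and ad: "adapted_blocks G X \<phi> H B bs" and bsR: "set bs \<subseteq> R"
    and r: "(d, \<rho>) \<in> R" and vY: "\<And>q. q < d \<Longrightarrow> v q \<in> CV Y" and v: "transforms_by G X \<phi> H d \<rho> v"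
    and q: "q < d" and nz: "coord B (v q) i \<noteq> 0"
  shows "i < length B \<and> block_label bs i = ((d, \<rho>), q)"
proof -
  define ds where "ds = map fst bs"
  have i: "i < length B" using lin_comb_coord(2)[OF B vY[OF q]] nz by (meson not_le)
  then have "i < sum_list ds" using ad by (simp add: adapted_blocks_def ds_def)
  define a where "a = block_of ds i"
  have blk: "a < length ds" "pos_in_block ds i < ds ! a" "block_start ds a + pos_in_block ds i = i"
    using block_index[OF \<open>i < sum_list ds\<close>] by (auto simp: a_def)
  obtain e \<sigma> where es: "bs ! a = (e, \<sigma>)" by (cases "bs ! a")
  have esR: "(e, \<sigma>) \<in> R" using bsR blk(1) es by (metis ds_def length_map nth_mem subsetD)
  have irr\<sigma>: "irreducible_mrep G H (e, \<sigma>)" using complete_irrepsD(1)[OF R esR] .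
  have irr\<rho>: "irreducible_mrep G H (d, \<rho>)" using complete_irrepsD(1)[OF R r] .
  let ?M = "\<lambda>i q. if i < e \<and> q < d then coord B (v q) (block_start ds a + i) else 0"
  have M: "intertwines H e \<sigma> d \<rho> ?M"
    using intertwines_coord_block[OF B ad vY v _ es irr\<sigma> irr\<rho>] blk(1) unfolding ds_def by simp
  have Mnz: "?M (pos_in_block ds i) q \<noteq> 0"
    using nz blk es q by (simp add: ds_def)
  have same: "(e, \<sigma>) = (d, \<rho>)"
    using schur_equiv[OF irr\<sigma> irr\<rho> M Mnz] complete_irrepsD(2)[OF R r esR] by simp
  then obtain c where "\<forall>i k. ?M i k = c * mat_id d i k"
    using schur_scalar[OF irr\<rho>, of ?M] M by auto
  then have "pos_in_block ds i = q" using Mnz by (auto simp: mat_id_def split: if_splits)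
  then show ?thesis using i same es by (simp add: block_label_def a_def ds_def)
qed

lemma adapted_blocks_transforms_by:
  assumes ad: "adapted_blocks G X \<phi> H B bs" and a: "a < length bs" and ba: "bs ! a = (d, \<rho>)"
  shows "transforms_by G X \<phi> H d \<rho> (\<lambda>q. B ! (block_start (map fst bs) a + q))"
  unfolding transforms_by_def
proof (intro ballI allI impI ext)
  fix h q x assume h: "h \<in> H" and q: "q < d"
  let ?ds = "map fst bs"
  let ?s = "block_start ?ds a"
  have N: "length B = sum_list ?ds" using ad by (simp add: adapted_blocks_def)
  have a': "a < length ?ds" "?ds ! a = d" using a ba by auto
  have in_block: "?s + l < sum_list ?ds" "block_of ?ds (?s + l) = a" "pos_in_block ?ds (?s + l) = l"
    if "l < d" for l
    using block_start_add_less[OF a'(1)] block_index_start[OF a'(1)] that a' by auto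
  have "fun_act G X \<phi> h (B ! (?s + q)) x = (\<Sum>i<sum_list ?ds. bdiag bs h i (?s + q) * (B ! i) x)"
    using ad h in_block(1)[OF q] N by (simp add: adapted_blocks_def lin_comb_def)
  also have "\<dots> = (\<Sum>p<?ds ! a. bdiag bs h (?s + p) (?s + q) * (B ! (?s + p)) x)"
    by (rule sum_over_block[OF a'(1)]) (use in_block[OF q] bdiag_block[of _ bs "?s + q" h] in simp)
  also have "\<dots> = (\<Sum>p<d. \<rho> h p q * (B ! (?s + p)) x)"
    using in_block in_block[OF q] ba a' bdiag_block[of "?s + _" bs "?s + q" h]
    by (auto intro!: sum.cong)
  finally show "fun_act G X \<phi> h (B ! (?s + q)) x = (\<Sum>p<d. \<rho> h p q * (B ! (?s + p)) x)" .
qed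

definition restr :: "'x set \<Rightarrow> ('x \<Rightarrow> complex) \<Rightarrow> 'x \<Rightarrow> complex" where
  "restr Y f = (\<lambda>x. if x \<in> Y then f x else 0)"

definition invariant_subset :: "'x set \<Rightarrow> ('g \<Rightarrow> 'x \<Rightarrow> 'x) \<Rightarrow> 'g set \<Rightarrow> 'x set \<Rightarrow> bool" where
  "invariant_subset X \<phi> H Y \<longleftrightarrow> Y \<subseteq> X \<and> (\<forall>h\<in>H. \<forall>y\<in>Y. \<phi> h y \<in> Y)"

lemma restr_CV: "f \<in> CV Y \<Longrightarrow> restr Y f = f"
  by (auto simp: CV_def restr_def)

lemma fun_act_restr:
  assumes act: "group_action G X \<phi>" and H: "subgroup H G" and Y: "invariant_subset X \<phi> H Y"
    and h: "h \<in> H"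
  shows "fun_act G X \<phi> h (restr Y f) = restr Y (fun_act G X \<phi> h f)"
proof
  fix x
  interpret group_action G X \<phi> by (rule act)
  interpret group G using group_hom group_hom.axioms(1) by auto
  have ih: "inv\<^bsub>G\<^esub> h \<in> H" using subgroup.m_inv_closed[OF H h] .
  have hc: "h \<in> carrier G" using subgroup.mem_carrier[OF H h] .
  show "fun_act G X \<phi> h (restr Y f) x = restr Y (fun_act G X \<phi> h f) x"
  proof (cases "x \<in> X")
    case True
    have "\<phi> h (\<phi> (inv\<^bsub>G\<^esub> h) x) = x"
      using orbit_sym_aux[OF inv_closed[OF hc] True refl] hc by simp
    have "x \<in> Y \<longleftrightarrow> \<phi> (inv\<^bsub>G\<^esub> h) x \<in> Y"
    proof
      assume "x \<in> Y"
      then show "\<phi> (inv\<^bsub>G\<^esub> h) x \<in> Y" using Y ih by (auto simp: invariant_subset_def)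
    next
      assume "\<phi> (inv\<^bsub>G\<^esub> h) x \<in> Y"
      then have "\<phi> h (\<phi> (inv\<^bsub>G\<^esub> h) x) \<in> Y" using Y h by (auto simp: invariant_subset_def)
      then show "x \<in> Y" using \<open>\<phi> h (\<phi> (inv\<^bsub>G\<^esub> h) x) = x\<close> by simp
    qed
    then show ?thesis using True Y by (auto simp: fun_act_def restr_def invariant_subset_def)
  qed (use Y in \<open>auto simp: fun_act_def restr_def invariant_subset_def\<close>)
qed

lemma transforms_by_restr:
  assumes act: "group_action G X \<phi>" and H: "subgroup H G" and Y: "invariant_subset X \<phi> H Y"
    and v: "transforms_by G X \<phi> H d \<rho> v"
  shows "transforms_by G X \<phi> H d \<rho> (\<lambda>q. restr Y (v q))"
  unfolding transforms_by_def
proof (intro ballI allI impI)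
  fix h q assume h: "h \<in> H" and q: "q < d"
  have "fun_act G X \<phi> h (restr Y (v q)) = restr Y (fun_act G X \<phi> h (v q))"
    by (rule fun_act_restr[OF act H Y h])
  also have "\<dots> = (\<lambda>x. \<Sum>p<d. \<rho> h p q * restr Y (v p) x)"
    using v h q by (auto simp: transforms_by_def restr_def)
  finally show "fun_act G X \<phi> h (restr Y (v q)) = (\<lambda>x. \<Sum>p<d. \<rho> h p q * restr Y (v p) x)" .
qed

lemma block_label_restr_coord_nonzero:
  assumes act: "group_action G X \<phi>" and H: "subgroup H G" and Y: "invariant_subset X \<phi> H Y"
    and R: "complete_irreps G H R"
    and B: "is_basis Y B" and ad: "adapted_blocks G X \<phi> H B bs" and bsR: "set bs \<subseteq> R"
    and ad': "adapted_blocks G X \<phi> H B' bs'" and bsR': "set bs' \<subseteq> R"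
    and k: "k < length B'" and nz: "coord B (restr Y (B' ! k)) i \<noteq> 0"
  shows "i < length B \<and> block_label bs i = block_label bs' k"
proof -
  let ?ds' = "map fst bs'"
  have "k < sum_list ?ds'" using ad' k by (simp add: adapted_blocks_def)
  define a where "a = block_of ?ds' k"
  have blk: "a < length bs'" "pos_in_block ?ds' k < ?ds' ! a"
    "block_start ?ds' a + pos_in_block ?ds' k = k"
    using block_index[OF \<open>k < sum_list ?ds'\<close>] by (auto simp: a_def)
  obtain d \<rho> where ba: "bs' ! a = (d, \<rho>)" by (cases "bs' ! a")
  have r: "(d, \<rho>) \<in> R" using bsR' nth_mem[OF blk(1)] ba by auto
  let ?v = "\<lambda>q. restr Y (B' ! (block_start ?ds' a + q))"
  have "i < length B \<and> block_label bs i = ((d, \<rho>), pos_in_block ?ds' k)"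
  proof (rule block_label_of_coord_nonzero[OF R B ad bsR r])
    show "\<And>q. q < d \<Longrightarrow> ?v q \<in> CV Y" by (auto simp: CV_def restr_def)
    show "transforms_by G X \<phi> H d \<rho> ?v"
      by (rule transforms_by_restr[OF act H Y adapted_blocks_transforms_by[OF ad' blk(1) ba]])
    show "pos_in_block ?ds' k < d" using blk ba by simp
    show "coord B (?v (pos_in_block ?ds' k)) i \<noteq> 0" using nz blk by simp
  qed
  then show ?thesis using ba by (simp add: block_label_def a_def)
qed

lemma respects_block_labels:
  assumes act: "group_action G X \<phi>" and H: "subgroup H G" and Y: "invariant_subset X \<phi> H Y"
    and R: "complete_irreps G H R"
    and B: "is_basis Y B" "adapted_blocks G X \<phi> H B bs" "set bs \<subseteq> R"
    and B': "is_basis Y B'" "adapted_blocks G X \<phi> H B' bs'" "set bs' \<subseteq> R"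
  shows "respects_labels (length B) (length B') (change_basis B B') (block_label bs) (block_label bs')"
  unfolding respects_labels_def change_basis_def
  using block_label_restr_coord_nonzero[OF act H Y R B B'(2,3)]
    restr_CV[OF is_basis_nth_CV[OF B'(1)]] by simp

text \<open>Any two adapted bases of CY have label classes (r, 0) of equal size, so the
  multiplicity does not depend on the basis.\<close>
lemma mult_eq_count:
  assumes act: "group_action G X \<phi>" and H: "subgroup H G" and Y: "invariant_subset X \<phi> H Y"
    and R: "complete_irreps G H R"
    and B: "is_basis Y B" "adapted_blocks G X \<phi> H B bs" "set bs \<subseteq> R"
  shows "Defs.mult G X \<phi> H R Y r = length (filter (\<lambda>s. s = r) bs)"
proof -
  have count_eq: "length (filter (\<lambda>s. s = r) bs') = length (filter (\<lambda>s. s = r) bs)"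
    if B': "is_basis Y B'" "adapted_blocks G X \<phi> H B' bs'" "set bs' \<subseteq> R" for B' bs'
  proof (cases "r \<in> R")
    case True
    have "0 < fst r"
      using irreducible_mrepD(1)[of G H "fst r" "snd r"] complete_irrepsD(1)[OF R True] by simp
    moreover have "card {i. i < length B \<and> block_label bs i = (r, 0)}
        = card {k. k < length B' \<and> block_label bs' k = (r, 0)}"
      using card_label_class_eq[OF change_basis_inverse_mats[OF B(1) B'(1)]
          respects_block_labels[OF act H Y R B B'] respects_block_labels[OF act H Y R B' B]] .
    ultimately show ?thesis
      using card_block_label[of 0 r bs] card_block_label[of 0 r bs'] B(2) B'(2)
      by (simp add: adapted_blocks_def)
  next
    case False
    then have "filter (\<lambda>s. s = r) bs = []" "filter (\<lambda>s. s = r) bs' = []"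
      using B(3) B'(3) by (auto simp: filter_empty_conv)
    then show ?thesis by simp
  qed
  show ?thesis
    unfolding Defs.mult_def
  proof (rule the_equality)
    show "\<exists>B' bs'. is_basis Y B' \<and> set bs' \<subseteq> R \<and> adapted_blocks G X \<phi> H B' bs' \<and>
        length (filter (\<lambda>s. s = r) bs') = length (filter (\<lambda>s. s = r) bs)"
      using B by blast
  qed (use count_eq in blast)
qed

section \<open>Orbits and concatenated bases\<close>

lemma sub_orbits_eq_orbits: "sub_orbits K X \<phi> = orbits (G\<lparr>carrier := K\<rparr>) X \<phi>"
  by (simp add: sub_orbits_def orbits_def orbit_def)

lemma orbit_eq_of_mem:
  assumes act: "group_action G X \<phi>" and K: "subgroup K G" and x: "x \<in> X"
    and y: "y \<in> orbit (G\<lparr>carrier := K\<rparr>) \<phi> x"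
  shows "orbit (G\<lparr>carrier := K\<rparr>) \<phi> y = orbit (G\<lparr>carrier := K\<rparr>) \<phi> x"
proof -
  interpret group_action "G\<lparr>carrier := K\<rparr>" X \<phi>
    using group_action.induced_action[OF act K] .
  have "y \<in> X" using y x element_image by (auto simp: orbit_def)
  then have "y \<in> orbit (G\<lparr>carrier := K\<rparr>) \<phi> y" by (rule orbit_refl)
  moreover have "orbit (G\<lparr>carrier := K\<rparr>) \<phi> y \<in> orbits (G\<lparr>carrier := K\<rparr>) X \<phi>"
    "orbit (G\<lparr>carrier := K\<rparr>) \<phi> x \<in> orbits (G\<lparr>carrier := K\<rparr>) X \<phi>"
    using \<open>y \<in> X\<close> x by (auto simp: orbits_def)
  ultimately show ?thesis using y disjoint_union by blast
qed

lemma sub_orbits_disjoint: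
  assumes act: "group_action G X \<phi>" and K: "subgroup K G"
    and "Y \<in> sub_orbits K X \<phi>" "Y' \<in> sub_orbits K X \<phi>" "Y \<noteq> Y'"
  shows "Y \<inter> Y' = {}"
  using group_action.disjoint_union[OF group_action.induced_action[OF act K]] assms(3-)
  by (auto simp: sub_orbits_eq_orbits[of _ _ _ G])

lemma Union_sub_orbits:
  assumes act: "group_action G X \<phi>" and K: "subgroup K G"
  shows "\<Union> (sub_orbits K X \<phi>) = X"
  using group_action.orbits_coverture[OF group_action.induced_action[OF act K]]
  by (simp add: sub_orbits_eq_orbits[of _ _ _ G])

lemma sub_orbit_subset:
  assumes act: "group_action G X \<phi>" and K: "subgroup K G" and Y: "Y \<in> sub_orbits K X \<phi>"
  shows "Y \<subseteq> X"
  using Union_sub_orbits[OF act K] Y by blast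

lemma sub_orbit_invariant:
  assumes act: "group_action G X \<phi>" and L: "subgroup L G" and HL: "H \<subseteq> L"
    and Y: "Y \<in> sub_orbits L X \<phi>"
  shows "invariant_subset X \<phi> H Y"
  unfolding invariant_subset_def
proof (intro conjI ballI)
  show "Y \<subseteq> X" using sub_orbit_subset[OF act L Y] .
  obtain x where x: "x \<in> X" "Y = orbit (G\<lparr>carrier := L\<rparr>) \<phi> x"
    using Y by (auto simp: sub_orbits_eq_orbits[of _ _ _ G] orbits_def)
  fix h y assume "h \<in> H" "y \<in> Y"
  then have "\<phi> h y \<in> orbit (G\<lparr>carrier := L\<rparr>) \<phi> y" using HL by (auto simp: orbit_def)
  then show "\<phi> h y \<in> Y" using orbit_eq_of_mem[OF act L x(1)] \<open>y \<in> Y\<close> x(2) by simp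
qed

text \<open>By enclosing_orbit_eq the point chosen by SOME does not matter when Y lies in a
  single K-orbit.\<close>

definition enclosing_orbit :: "('g, 'm) monoid_scheme \<Rightarrow> 'g set \<Rightarrow> ('g \<Rightarrow> 'x \<Rightarrow> 'x)
    \<Rightarrow> 'x set \<Rightarrow> 'x set" where
  "enclosing_orbit G K \<phi> Y = orbit (G\<lparr>carrier := K\<rparr>) \<phi> (SOME y. y \<in> Y)"

lemma enclosing_orbit_eq:
  assumes act: "group_action G X \<phi>" and K: "subgroup K G" and L: "subgroup L G" and LK: "L \<subseteq> K"
    and Y: "Y \<in> sub_orbits L X \<phi>" and x: "x \<in> Y"
  shows "enclosing_orbit G K \<phi> Y = orbit (G\<lparr>carrier := K\<rparr>) \<phi> x"
proof -
  obtain z where z: "z \<in> X" "Y = orbit (G\<lparr>carrier := L\<rparr>) \<phi> z"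
    using Y by (auto simp: sub_orbits_eq_orbits[of _ _ _ G] orbits_def)
  have "Y \<subseteq> orbit (G\<lparr>carrier := K\<rparr>) \<phi> z" using z(2) LK by (auto simp: orbit_def)
  moreover have "(SOME y. y \<in> Y) \<in> Y" using x by (rule someI)
  ultimately have "orbit (G\<lparr>carrier := K\<rparr>) \<phi> (SOME y. y \<in> Y) = orbit (G\<lparr>carrier := K\<rparr>) \<phi> z"
    "orbit (G\<lparr>carrier := K\<rparr>) \<phi> x = orbit (G\<lparr>carrier := K\<rparr>) \<phi> z"
    using orbit_eq_of_mem[OF act K z(1)] x by auto
  then show ?thesis unfolding enclosing_orbit_def by simp
qed

lemma enclosing_orbit_self:
  assumes act: "group_action G X \<phi>" and K: "subgroup K G" and Y: "Y \<in> sub_orbits K X \<phi>"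
  shows "enclosing_orbit G K \<phi> Y = Y"
proof -
  obtain z where z: "z \<in> X" "Y = orbit (G\<lparr>carrier := K\<rparr>) \<phi> z"
    using Y by (auto simp: sub_orbits_eq_orbits[of _ _ _ G] orbits_def)
  have "z \<in> Y"
    using group_action.orbit_refl[OF group_action.induced_action[OF act K] z(1)] z(2) by simp
  then show ?thesis using enclosing_orbit_eq[OF act K K order_refl Y] z(2) by simp
qed

lemma enclosing_orbit_mem:
  assumes act: "group_action G X \<phi>" and K: "subgroup K G" and L: "subgroup L G" and LK: "L \<subseteq> K"
    and Y: "Y \<in> sub_orbits L X \<phi>"
  shows "enclosing_orbit G K \<phi> Y \<in> sub_orbits K X \<phi>"
proof -
  obtain z where z: "z \<in> X" "Y = orbit (G\<lparr>carrier := L\<rparr>) \<phi> z"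
    using Y by (auto simp: sub_orbits_eq_orbits[of _ _ _ G] orbits_def)
  have "z \<in> Y"
    using group_action.orbit_refl[OF group_action.induced_action[OF act L] z(1)] z(2) by simp
  then show ?thesis
    using enclosing_orbit_eq[OF act K L LK Y] z(1)
    by (auto simp: sub_orbits_eq_orbits[of _ _ _ G] orbits_def)
qed

definition disjoint_bases :: "'x set list \<Rightarrow> ('x \<Rightarrow> complex) list list \<Rightarrow> bool" where
  "disjoint_bases Ys Cs \<longleftrightarrow> length Ys = length Cs \<and> (\<forall>l<length Ys. is_basis (Ys ! l) (Cs ! l))
     \<and> (\<forall>l<length Ys. \<forall>l'<length Ys. l \<noteq> l' \<longrightarrow> Ys ! l \<inter> Ys ! l' = {})"

lemma disjoint_bases_nth_concat:
  assumes YC: "disjoint_bases Ys Cs" and i: "i < length (concat Cs)"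
  shows "block_of (map length Cs) i < length Ys"
    "pos_in_block (map length Cs) i < length (Cs ! block_of (map length Cs) i)"
    "concat Cs ! i = Cs ! block_of (map length Cs) i ! pos_in_block (map length Cs) i"
    "concat Cs ! i \<in> CV (Ys ! block_of (map length Cs) i)"
proof -
  let ?ls = "map length Cs"
  have "i < sum_list ?ls" using i by (simp add: length_concat)
  note blk = block_index[OF this]
  show l: "block_of ?ls i < length Ys" and p: "pos_in_block ?ls i < length (Cs ! block_of ?ls i)"
    using blk YC by (auto simp: disjoint_bases_def)
  show "concat Cs ! i = Cs ! block_of ?ls i ! pos_in_block ?ls i" by (rule nth_concat_block[OF i])
  then show "concat Cs ! i \<in> CV (Ys ! block_of ?ls i)"
    using is_basis_nth_CV[OF _ p] YC l by (auto simp: disjoint_bases_def)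
qed

lemma lin_comb_concat:
  assumes YC: "disjoint_bases Ys Cs" and l: "l < length Ys" and x: "x \<in> Ys ! l"
  shows "lin_comb (concat Cs) c x = lin_comb (Cs ! l) (\<lambda>p. c (block_start (map length Cs) l + p)) x"
proof -
  let ?ls = "map length Cs"
  have l': "l < length ?ls" using l YC by (simp add: disjoint_bases_def)
  have "lin_comb (concat Cs) c x = (\<Sum>i<sum_list ?ls. c i * (concat Cs ! i) x)"
    by (simp add: lin_comb_def length_concat)
  also have "\<dots> = (\<Sum>p<?ls ! l. c (block_start ?ls l + p) * (concat Cs ! (block_start ?ls l + p)) x)"
  proof (rule sum_over_block[OF l'])
    fix i assume i: "i < sum_list ?ls" "block_of ?ls i \<noteq> l"
    then have "i < length (concat Cs)" by (simp add: length_concat)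
    note nth = disjoint_bases_nth_concat[OF YC this]
    have "Ys ! block_of ?ls i \<inter> Ys ! l = {}"
      using YC i(2) nth(1) l unfolding disjoint_bases_def by blast
    then have "x \<notin> Ys ! block_of ?ls i" using x by blast
    then show "c i * (concat Cs ! i) x = 0" using nth(4) by (simp add: CV_def)
  qed
  also have "\<dots> = lin_comb (Cs ! l) (\<lambda>p. c (block_start ?ls l + p)) x"
  proof -
    have "concat Cs ! (block_start ?ls l + p) = Cs ! l ! p" if "p < ?ls ! l" for p
      using nth_concat_block[of "block_start ?ls l + p" Cs] block_start_add_less[OF l' that]
        block_index_start[OF l' that] by (simp add: length_concat)
    then show ?thesis using l' by (auto simp: lin_comb_def intro!: sum.cong)
  qed
  finally show ?thesis .
qed

lemma lin_comb_concat_outside: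
  assumes YC: "disjoint_bases Ys Cs" and x: "x \<notin> \<Union> (set Ys)"
  shows "lin_comb (concat Cs) c x = 0"
proof -
  have "(concat Cs ! i) x = 0" if "i < length (concat Cs)" for i
    using disjoint_bases_nth_concat[OF YC that] x by (auto simp: CV_def)
  then show ?thesis by (simp add: lin_comb_def)
qed

lemma lin_comb_concat_restr:
  assumes YC: "disjoint_bases Ys Cs" and v: "v \<in> CV (\<Union> (set Ys))"
  shows "v = lin_comb (concat Cs) (\<lambda>i. if i < length (concat Cs)
      then coord (Cs ! block_of (map length Cs) i) (restr (Ys ! block_of (map length Cs) i) v)
        (pos_in_block (map length Cs) i) else 0)" (is "v = lin_comb _ ?c")
proof
  fix x
  let ?ls = "map length Cs"
  show "v x = lin_comb (concat Cs) ?c x"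
  proof (cases "x \<in> \<Union> (set Ys)")
    case True
    then obtain l where l: "l < length Ys" "x \<in> Ys ! l" by (auto simp: in_set_conv_nth)
    have l': "l < length ?ls" using l YC by (simp add: disjoint_bases_def)
    have Bl: "is_basis (Ys ! l) (Cs ! l)" using YC l by (simp add: disjoint_bases_def)
    have "?c (block_start ?ls l + p) = coord (Cs ! l) (restr (Ys ! l) v) p"
      if "p < length (Cs ! l)" for p
      using block_start_add_less[OF l'] block_index_start[OF l'] that l'
      by (simp add: length_concat)
    then have "lin_comb (concat Cs) ?c x = lin_comb (Cs ! l) (coord (Cs ! l) (restr (Ys ! l) v)) x"
      unfolding lin_comb_concat[OF YC l] by (simp add: lin_comb_def)
    also have "\<dots> = restr (Ys ! l) v x"
      using lin_comb_coord(1)[OF Bl, of "restr (Ys ! l) v"] by (simp add: restr_def CV_def)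
    finally show ?thesis using l by (simp add: restr_def)
  qed (use lin_comb_concat_outside[OF YC] v in \<open>auto simp: CV_def\<close>)
qed

lemma is_basis_concat:
  assumes YC: "disjoint_bases Ys Cs"
  shows "is_basis (\<Union> (set Ys)) (concat Cs)"
  unfolding is_basis_def
proof (intro conjI allI impI ballI)
  let ?ls = "map length Cs"
  show "set (concat Cs) \<subseteq> CV (\<Union> (set Ys))"
  proof
    fix f assume "f \<in> set (concat Cs)"
    then obtain i where i: "i < length (concat Cs)" "f = concat Cs ! i"
      using in_set_conv_nth[of f "concat Cs"] by blast
    then show "f \<in> CV (\<Union> (set Ys))"
      using disjoint_bases_nth_concat[OF YC i(1)] nth_mem[of "block_of ?ls i" Ys] by (auto simp: CV_def)
  qed
next
  let ?ls = "map length Cs"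
  fix c i assume z: "lin_comb (concat Cs) c = (\<lambda>_. 0)" and i: "i < length (concat Cs)"
  define l where "l = block_of ?ls i"
  have blk: "l < length Ys" "pos_in_block ?ls i < length (Cs ! l)"
    using disjoint_bases_nth_concat[OF YC i] by (simp_all add: l_def)
  have "block_start ?ls l + pos_in_block ?ls i = i"
    using block_index[of i ?ls] i by (simp add: l_def length_concat)
  have Bl: "is_basis (Ys ! l) (Cs ! l)" using YC blk(1) by (simp add: disjoint_bases_def)
  have "lin_comb (Cs ! l) (\<lambda>p. c (block_start ?ls l + p)) = (\<lambda>_. 0)"
  proof
    fix x show "lin_comb (Cs ! l) (\<lambda>p. c (block_start ?ls l + p)) x = 0"
    proof (cases "x \<in> Ys ! l")
      case True then show ?thesis using lin_comb_concat[OF YC blk(1) True, of c] z by simp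
    next
      case False
      have "(Cs ! l ! p) x = 0" if "p < length (Cs ! l)" for p
        using is_basis_nth_CV[OF Bl that] False by (simp add: CV_def)
      then show ?thesis by (simp add: lin_comb_def)
    qed
  qed
  then have "c (block_start ?ls l + pos_in_block ?ls i) = 0"
    using Bl blk(2) unfolding is_basis_def by blast
  then show "c i = 0" using \<open>block_start ?ls l + pos_in_block ?ls i = i\<close> by simp
next
  fix v assume "v \<in> CV (\<Union> (set Ys))"
  then show "\<exists>c. v = lin_comb (concat Cs) c" using lin_comb_concat_restr[OF YC] by blast
qed

lemma coord_concat:
  assumes YC: "disjoint_bases Ys Cs" and v: "v \<in> CV (\<Union> (set Ys))" and i: "i < length (concat Cs)"
  shows "coord (concat Cs) v i = coord (Cs ! block_of (map length Cs) i)
      (restr (Ys ! block_of (map length Cs) i) v) (pos_in_block (map length Cs) i)"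
  using coord_eqI[OF is_basis_concat[OF YC] lin_comb_concat_restr[OF YC v]] i by simp

section \<open>Sparsity of the change of basis matrices\<close>

definition orbit_decomposition :: "('g, 'm) monoid_scheme \<Rightarrow> 'x set \<Rightarrow> ('g \<Rightarrow> 'x \<Rightarrow> 'x)
    \<Rightarrow> 'g set \<Rightarrow> 'g set \<Rightarrow> 'g mrep set \<Rightarrow> ('x \<Rightarrow> complex) list
    \<Rightarrow> 'x set list \<Rightarrow> ('x \<Rightarrow> complex) list list \<Rightarrow> (nat \<Rightarrow> 'g mrep list) \<Rightarrow> bool" where
  "orbit_decomposition G X \<phi> L H R B Ys Cs bsf \<longleftrightarrow>
     distinct Ys \<and> set Ys = sub_orbits L X \<phi> \<and> length Ys = length Cs \<and> B = concat Cs \<and>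
     (\<forall>l<length Ys. is_basis (Ys ! l) (Cs ! l) \<and> set (bsf l) \<subseteq> R
        \<and> adapted_blocks G X \<phi> H (Cs ! l) (bsf l))"

lemma orbital_sa_decomposition:
  assumes "orbital_sa G X \<phi> Gs Rs j B" "i \<in> {1..j}"
  shows "\<exists>Ys Cs bsf. orbit_decomposition G X \<phi> (Gs j) (Gs i) (Rs i) B Ys Cs bsf"
proof -
  obtain Ys Cs where YC: "length Ys = length Cs" "distinct Ys" "set Ys = sub_orbits (Gs j) X \<phi>"
    "B = concat Cs" "\<forall>l<length Ys. sym_adapted G X \<phi> (Gs i) (Rs i) (Ys ! l) (Cs ! l)"
    using assms unfolding orbital_sa_def by blast
  then obtain bsf where "\<forall>l<length Ys. is_basis (Ys ! l) (Cs ! l) \<and> set (bsf l) \<subseteq> Rs i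
      \<and> adapted_blocks G X \<phi> (Gs i) (Cs ! l) (bsf l)"
    unfolding sym_adapted_def by metis
  with YC show ?thesis unfolding orbit_decomposition_def by blast
qed

lemma orbit_decomposition_disjoint_bases:
  assumes act: "group_action G X \<phi>" and L: "subgroup L G"
    and D: "orbit_decomposition G X \<phi> L H R B Ys Cs bsf"
  shows "disjoint_bases Ys Cs" "\<Union> (set Ys) = X"
proof -
  show "\<Union> (set Ys) = X" using D Union_sub_orbits[OF act L] by (simp add: orbit_decomposition_def)
  have "Ys ! l \<inter> Ys ! l' = {}" if "l < length Ys" "l' < length Ys" "l \<noteq> l'" for l l'
  proof (rule sub_orbits_disjoint[OF act L])
    show "Ys ! l \<in> sub_orbits L X \<phi>" "Ys ! l' \<in> sub_orbits L X \<phi>"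
      using D nth_mem that(1,2) by (auto simp: orbit_decomposition_def)
    show "Ys ! l \<noteq> Ys ! l'" using D that by (simp add: orbit_decomposition_def nth_eq_iff_index_eq)
  qed
  then show "disjoint_bases Ys Cs" using D by (simp add: orbit_decomposition_def disjoint_bases_def)
qed

lemma orbit_decomposition_is_basis:
  assumes act: "group_action G X \<phi>" and L: "subgroup L G"
    and D: "orbit_decomposition G X \<phi> L H R B Ys Cs bsf"
  shows "is_basis X B"
  using is_basis_concat[OF orbit_decomposition_disjoint_bases(1)[OF act L D]]
    orbit_decomposition_disjoint_bases(2)[OF act L D] D by (simp add: orbit_decomposition_def)

definition orbit_label :: "('g, 'm) monoid_scheme \<Rightarrow> 'g set \<Rightarrow> ('g \<Rightarrow> 'x \<Rightarrow> 'x)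
    \<Rightarrow> 'x set list \<Rightarrow> ('x \<Rightarrow> complex) list list \<Rightarrow> (nat \<Rightarrow> 'g mrep list)
    \<Rightarrow> nat \<Rightarrow> 'x set \<times> 'g mrep \<times> nat" where
  "orbit_label G K \<phi> Ys Cs bsf i = (let l = block_of (map length Cs) i in
     (enclosing_orbit G K \<phi> (Ys ! l), block_label (bsf l) (pos_in_block (map length Cs) i)))"

lemma orbit_label_eq_of_coord_nonzero:
  assumes act: "group_action G X \<phi>" and K: "subgroup K G" and H: "subgroup H G"
    and L: "subgroup L G" "H \<subseteq> L" "L \<subseteq> K" and L': "subgroup L' G" "H \<subseteq> L'" "L' \<subseteq> K"
    and R: "complete_irreps G H R"
    and D: "orbit_decomposition G X \<phi> L H R B Ys Cs bsf"
    and D': "orbit_decomposition G X \<phi> L' H R B' Zs Ds bsf'"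
    and i: "i < length B" and k: "k < length B'" and nz: "change_basis B B' i k \<noteq> 0"
  shows "orbit_label G K \<phi> Ys Cs bsf i = orbit_label G K \<phi> Zs Ds bsf' k"
proof -
  let ?ls = "map length Cs" and ?ms = "map length Ds"
  define l where "l = block_of ?ls i"
  define m where "m = block_of ?ms k"
  note YC = orbit_decomposition_disjoint_bases[OF act L(1) D]
  note ZD = orbit_decomposition_disjoint_bases[OF act L'(1) D']
  have B: "B = concat Cs" and B': "B' = concat Ds" using D D' by (simp_all add: orbit_decomposition_def)
  have ik: "i < length (concat Cs)" "k < length (concat Ds)" using i k B B' by simp_all
  note iY = disjoint_bases_nth_concat[OF YC(1) ik(1), folded l_def B]
  note kZ = disjoint_bases_nth_concat[OF ZD(1) ik(2), folded m_def B']
  have Dl: "is_basis (Ys ! l) (Cs ! l)" "adapted_blocks G X \<phi> H (Cs ! l) (bsf l)" "set (bsf l) \<subseteq> R"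
    and Yl: "Ys ! l \<in> sub_orbits L X \<phi>"
    using D iY(1) nth_mem[OF iY(1)] by (auto simp: orbit_decomposition_def)
  have Dm: "adapted_blocks G X \<phi> H (Ds ! m) (bsf' m)" "set (bsf' m) \<subseteq> R"
    and Zm: "Zs ! m \<in> sub_orbits L' X \<phi>"
    using D' kZ(1) nth_mem[OF kZ(1)] by (auto simp: orbit_decomposition_def)
  have "B' ! k \<in> CV X" using kZ(4) ZD(2) kZ(1) by (auto simp: CV_def)
  then have nz': "coord (Cs ! l) (restr (Ys ! l) (Ds ! m ! pos_in_block ?ms k))
      (pos_in_block ?ls i) \<noteq> 0"
    using nz coord_concat[OF YC(1)] YC(2) i kZ(3) by (simp add: change_basis_def B l_def)
  have "block_label (bsf l) (pos_in_block ?ls i) = block_label (bsf' m) (pos_in_block ?ms k)"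
    using block_label_restr_coord_nonzero[OF act H sub_orbit_invariant[OF act L(1,2) Yl] R Dl Dm
        kZ(2) nz'] by simp
  moreover obtain x where x: "x \<in> Ys ! l" "x \<in> Zs ! m"
  proof -
    have "restr (Ys ! l) (Ds ! m ! pos_in_block ?ms k) \<noteq> (\<lambda>_. 0)"
      using nz' coord_zero[OF Dl(1)] by auto
    then obtain x where "x \<in> Ys ! l" "(Ds ! m ! pos_in_block ?ms k) x \<noteq> 0"
      by (auto simp: restr_def fun_eq_iff split: if_splits)
    moreover have "x \<in> Zs ! m" using kZ(3,4) calculation(2) by (auto simp: CV_def)
    ultimately show thesis using that by blast
  qed
  then have "enclosing_orbit G K \<phi> (Ys ! l) = enclosing_orbit G K \<phi> (Zs ! m)"
    using enclosing_orbit_eq[OF act K L(1,3) Yl] enclosing_orbit_eq[OF act K L'(1,3) Zm] by simp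
  ultimately show ?thesis by (simp add: orbit_label_def l_def m_def Let_def)
qed

lemma respects_orbit_labels:
  assumes act: "group_action G X \<phi>" and K: "subgroup K G" and H: "subgroup H G"
    and L: "subgroup L G" "H \<subseteq> L" "L \<subseteq> K" and L': "subgroup L' G" "H \<subseteq> L'" "L' \<subseteq> K"
    and R: "complete_irreps G H R"
    and D: "orbit_decomposition G X \<phi> L H R B Ys Cs bsf"
    and D': "orbit_decomposition G X \<phi> L' H R B' Zs Ds bsf'"
  shows "respects_labels (length B) (length B') (change_basis B B')
    (orbit_label G K \<phi> Ys Cs bsf) (orbit_label G K \<phi> Zs Ds bsf')"
  using orbit_label_eq_of_coord_nonzero[OF act K H L L' R D D'] by (simp add: respects_labels_def)

lemma card_orbit_label_class:
  assumes act: "group_action G X \<phi>" and K: "subgroup K G" and H: "subgroup H G" "H \<subseteq> K"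
    and R: "complete_irreps G H R" and D: "orbit_decomposition G X \<phi> K H R B Ys Cs bsf"
    and Y: "Y \<in> sub_orbits K X \<phi>" and q: "q < fst r"
  shows "card {i. i < length B \<and> orbit_label G K \<phi> Ys Cs bsf i = (Y, r, q)} = Defs.mult G X \<phi> H R Y r"
proof -
  let ?ls = "map length Cs"
  have "Y \<in> set Ys" using D Y by (simp add: orbit_decomposition_def)
  then obtain l where l: "l < length Ys" "Y = Ys ! l" by (auto simp: in_set_conv_nth)
  have Dl: "is_basis (Ys ! l) (Cs ! l)" "adapted_blocks G X \<phi> H (Cs ! l) (bsf l)" "set (bsf l) \<subseteq> R"
    using D l(1) by (auto simp: orbit_decomposition_def)
  have enc: "enclosing_orbit G K \<phi> (Ys ! l') = Ys ! l'" if "l' < length Ys" for l'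
    using enclosing_orbit_self[OF act K] D nth_mem[OF that] by (simp add: orbit_decomposition_def)
  have "{i. i < length B \<and> orbit_label G K \<phi> Ys Cs bsf i = (Y, r, q)}
      = {i. i < sum_list ?ls \<and> block_of ?ls i = l \<and> block_label (bsf l) (pos_in_block ?ls i) = (r, q)}"
  proof -
    have "Ys ! block_of ?ls i = Ys ! l \<longleftrightarrow> block_of ?ls i = l" if "i < sum_list ?ls" for i
      using D block_index[OF that] l(1) by (simp add: orbit_decomposition_def nth_eq_iff_index_eq)
    moreover have "block_of ?ls i < length Ys" if "i < sum_list ?ls" for i
      using D block_index[OF that] by (simp add: orbit_decomposition_def)
    ultimately show ?thesis
      using D enc l(2) by (auto simp: orbit_label_def Let_def orbit_decomposition_def length_concat)
  qed
  also have "card \<dots> = card {p. p < length (Cs ! l) \<and> block_label (bsf l) p = (r, q)}"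
    using card_block_filter[of l ?ls] D l(1) by (simp add: orbit_decomposition_def)
  also have "\<dots> = length (filter (\<lambda>s. s = r) (bsf l))"
    using card_block_label[OF q, of "bsf l"] Dl(2) by (simp add: adapted_blocks_def)
  also have "\<dots> = Defs.mult G X \<phi> H R Y r"
    using mult_eq_count[OF act H(1) sub_orbit_invariant[OF act K H(2)] R Dl] Y l(2) by simp
  finally show ?thesis .
qed

lemma orbit_label_mem:
  assumes act: "group_action G X \<phi>" and K: "subgroup K G" and L: "subgroup L G" "L \<subseteq> K"
    and D: "orbit_decomposition G X \<phi> L H R B Ys Cs bsf" and i: "i < length B"
  shows "orbit_label G K \<phi> Ys Cs bsf i \<in> sub_orbits K X \<phi> \<times> Sigma R (\<lambda>r. {..<fst r})"
proof -
  let ?ls = "map length Cs"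
  define l where "l = block_of ?ls i"
  have B: "B = concat Cs" using D by (simp add: orbit_decomposition_def)
  note iY = disjoint_bases_nth_concat[OF orbit_decomposition_disjoint_bases(1)[OF act L(1) D],
      of i, folded B l_def, OF i]
  have Dl: "adapted_blocks G X \<phi> H (Cs ! l) (bsf l)" "set (bsf l) \<subseteq> R"
    and Yl: "Ys ! l \<in> sub_orbits L X \<phi>"
    using D iY(1) nth_mem[OF iY(1)] by (auto simp: orbit_decomposition_def)
  let ?ds = "map fst (bsf l)"
  have "pos_in_block ?ls i < sum_list ?ds" using iY(2) Dl(1) by (simp add: adapted_blocks_def)
  from block_index[OF this]
  have "bsf l ! block_of ?ds (pos_in_block ?ls i) \<in> R"
    "pos_in_block ?ds (pos_in_block ?ls i) < fst (bsf l ! block_of ?ds (pos_in_block ?ls i))"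
    using Dl(2) nth_mem by auto
  then show ?thesis
    using enclosing_orbit_mem[OF act K L Yl]
    by (simp add: orbit_label_def Let_def block_label_def l_def)
qed

lemma sum_mult_squares_eq_PhiX:
  assumes "finite X" "finite R"
  shows "(\<Sum>c\<in>sub_orbits K X \<phi> \<times> Sigma R (\<lambda>r. {..<fst r}). (Defs.mult G X \<phi> H R (fst c) (fst (snd c)))\<^sup>2)
       = PhiX G X \<phi> K H R"
proof -
  let ?m = "Defs.mult G X \<phi> H R"
  have fin: "finite (sub_orbits K X \<phi>)" using assms(1) by (simp add: sub_orbits_def)
  have "(\<Sum>c\<in>sub_orbits K X \<phi> \<times> Sigma R (\<lambda>r. {..<fst r}). (?m (fst c) (fst (snd c)))\<^sup>2)
      = (\<Sum>Y\<in>sub_orbits K X \<phi>. \<Sum>rq\<in>Sigma R (\<lambda>r. {..<fst r}). (?m Y (fst rq))\<^sup>2)"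
    using fin assms(2) by (subst sum.Sigma) (auto simp: case_prod_beta)
  also have "\<dots> = (\<Sum>Y\<in>sub_orbits K X \<phi>. \<Sum>r\<in>R. \<Sum>q<fst r. (?m Y r)\<^sup>2)"
    using assms(2) by (subst sum.Sigma) (auto simp: case_prod_beta)
  also have "\<dots> = PhiX G X \<phi> K H R" by (simp add: PhiX_def PhiY_def mult.commute)
  finally show ?thesis .
qed

lemma mult_le_KX:
  assumes "finite X" "finite R" "Y \<in> sub_orbits K X \<phi>" "r \<in> R"
  shows "Defs.mult G X \<phi> H R Y r \<le> KX G X \<phi> K H R"
proof -
  have "Defs.mult G X \<phi> H R Y r \<le> KY G X \<phi> H R Y"
    unfolding KY_def by (rule Max_ge) (use assms in auto)
  also have "\<dots> \<le> KX G X \<phi> K H R"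
    unfolding KX_def by (rule Max_ge) (use assms in \<open>auto simp: sub_orbits_def\<close>)
  finally show ?thesis .
qed

lemma change_basis_orbit_decompositions_sparse:
  assumes act: "group_action G X \<phi>" and finX: "finite X"
    and K: "subgroup K G" and H: "subgroup H G" "H \<subseteq> K" "finite H" and R: "complete_irreps G H R"
    and D: "orbit_decomposition G X \<phi> K H R B Ys Cs bsf"
    and D': "orbit_decomposition G X \<phi> H H R B' Zs Ds bsf'"
  shows "nnz (card X) (card X) (change_basis B B') \<le> PhiX G X \<phi> K H R
     \<and> (\<forall>k<card X. card {i. i < card X \<and> change_basis B B' i k \<noteq> 0} \<le> KX G X \<phi> K H R)
     \<and> nnz (card X) (card X) (change_basis B B') \<le> KX G X \<phi> K H R * card X"
proof -
  let ?N = "card X" and ?C = "change_basis B B'"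
  let ?lbl = "orbit_label G K \<phi> Ys Cs bsf" and ?lbl' = "orbit_label G K \<phi> Zs Ds bsf'"
  let ?F = "sub_orbits K X \<phi> \<times> Sigma R (\<lambda>r. {..<fst r})"
  have "group G" using group_action.group_hom[OF act] group_hom.axioms(1) by blast
  then have finR: "finite R" using group.complete_irreps_finite H(1,3) R by metis
  have B: "is_basis X B" and B': "is_basis X B'"
    using orbit_decomposition_is_basis[OF act K D] orbit_decomposition_is_basis[OF act H(1) D'] .
  have N: "length B = ?N" "length B' = ?N"
    using is_basis_length_card[OF finX B] is_basis_length_card[OF finX B'] .
  have inv: "inverse_mats ?N ?N ?C (change_basis B' B)"
    using change_basis_inverse_mats[OF B B'] N by simp
  have resp: "respects_labels ?N ?N ?C ?lbl ?lbl'"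
    using respects_orbit_labels[OF act K H(1) K H(2) order_refl H(1) order_refl H(2) R D D'] N by simp
  have resp': "respects_labels ?N ?N (change_basis B' B) ?lbl' ?lbl"
    using respects_orbit_labels[OF act K H(1) H(1) order_refl H(2) K H(2) order_refl R D' D] N by simp
  have class_card: "card {i. i < ?N \<and> ?lbl i = c} = Defs.mult G X \<phi> H R (fst c) (fst (snd c))"
    if "c \<in> ?F" for c
    using card_orbit_label_class[OF act K H(1,2) R D,
        where Y="fst c" and r="fst (snd c)" and q="snd (snd c)"] that N
    by (auto simp: prod_eq_iff)
  have "nnz ?N ?N ?C \<le> (\<Sum>c\<in>?F. (card {i. i < ?N \<and> ?lbl i = c})\<^sup>2)"
    using nnz_le_sum_label_class_squares[OF inv resp resp'] orbit_label_mem[OF act K K order_refl D]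
      finR finX N by (simp add: sub_orbits_def)
  also have "\<dots> = PhiX G X \<phi> K H R"
    using class_card sum_mult_squares_eq_PhiX[OF finX finR] by simp
  finally have Phi: "nnz ?N ?N ?C \<le> PhiX G X \<phi> K H R" .
  have col: "card {i. i < ?N \<and> ?C i k \<noteq> 0} \<le> KX G X \<phi> K H R" if "k < ?N" for k
  proof -
    have F: "?lbl' k \<in> ?F" using orbit_label_mem[OF act K H(1,2) D'] that N by simp
    have "card {i. i < ?N \<and> ?C i k \<noteq> 0} \<le> card {i. i < ?N \<and> ?lbl i = ?lbl' k}"
      by (rule column_nnz_le_label_class[OF resp that])
    also have "\<dots> = Defs.mult G X \<phi> H R (fst (?lbl' k)) (fst (snd (?lbl' k)))"
      by (rule class_card[OF F])
    also have "\<dots> \<le> KX G X \<phi> K H R"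
      using F by (intro mult_le_KX[OF finX finR]) auto
    finally show ?thesis .
  qed
  have "nnz ?N ?N ?C = (\<Sum>k<?N. card {i. i < ?N \<and> ?C i k \<noteq> 0})" by (rule nnz_eq_sum_column_nnz)
  also have "\<dots> \<le> (\<Sum>k<?N. KX G X \<phi> K H R)" by (rule sum_mono) (use col in simp)
  finally have "nnz ?N ?N ?C \<le> KX G X \<phi> K H R * ?N" by (simp add: mult.commute)
  with Phi col show ?thesis by blast
qed

theorem theorem3:
  fixes G :: "('g, 'm) monoid_scheme" and X :: "'x set" and \<phi> :: "'g \<Rightarrow> 'x \<Rightarrow> 'x"
    and n j :: nat and Gs :: "nat \<Rightarrow> 'g set" and Rs :: "nat \<Rightarrow> 'g mrep set"
    and Bs :: "nat \<Rightarrow> ('x \<Rightarrow> complex) list"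
  assumes grp: "group G" and finG: "finite (carrier G)" and finX: "finite X"
    and act: "group_action G X \<phi>"
    and G1: "Gs 1 = {\<one>\<^bsub>G\<^esub>}" and Gn: "Gs n = carrier G"
    and sub: "\<forall>i\<in>{1..n}. subgroup (Gs i) G"
    and chain: "\<forall>i\<in>{1..<n}. Gs i \<subset> Gs (Suc i)"
    and irr: "\<forall>i\<in>{1..n}. complete_irreps G (Gs i) (Rs i)"
    and compat: "\<exists>B. \<forall>i\<in>{1..n}. sym_adapted G X \<phi> (Gs i) (Rs i) X B"
    and orb: "\<forall>i\<in>{1..n}. orbital_sa G X \<phi> Gs Rs i (Bs i)"
    and B1: "\<exists>xs. distinct xs \<and> set xs = X \<and> Bs 1 = map indic xs"
    and j: "2 \<le> j" "j \<le> n"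
  shows "nnz (card X) (card X) (change_basis (Bs j) (Bs (j - 1)))
           \<le> PhiX G X \<phi> (Gs j) (Gs (j - 1)) (Rs (j - 1))
       \<and> (\<forall>k<card X. card {i. i < card X \<and> change_basis (Bs j) (Bs (j - 1)) i k \<noteq> 0}
           \<le> KX G X \<phi> (Gs j) (Gs (j - 1)) (Rs (j - 1)))
       \<and> nnz (card X) (card X) (change_basis (Bs j) (Bs (j - 1)))
           \<le> KX G X \<phi> (Gs j) (Gs (j - 1)) (Rs (j - 1)) * card X"
proof -
  have idx: "j - 1 \<in> {1..n}" "j \<in> {1..n}" "j - 1 \<in> {1..j}" "j - 1 \<in> {1..j - 1}" "j - 1 \<in> {1..<n}"
    using j by auto
  have K: "subgroup (Gs j) G" and H: "subgroup (Gs (j - 1)) G" using sub idx(1,2) by blast+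
  have "Gs (j - 1) \<subset> Gs (Suc (j - 1))" using chain idx(5) by blast
  then have HK: "Gs (j - 1) \<subseteq> Gs j" using j(1) by simp
  have finH: "finite (Gs (j - 1))" using finite_subset[OF subgroup.subset[OF H] finG] .
  have R: "complete_irreps G (Gs (j - 1)) (Rs (j - 1))" using irr idx(1) by blast
  obtain Ys Cs bsf where
    D: "orbit_decomposition G X \<phi> (Gs j) (Gs (j - 1)) (Rs (j - 1)) (Bs j) Ys Cs bsf"
    using orbital_sa_decomposition orb idx(2,3) by blast
  obtain Zs Ds bsf' where
    D': "orbit_decomposition G X \<phi> (Gs (j - 1)) (Gs (j - 1)) (Rs (j - 1)) (Bs (j - 1)) Zs Ds bsf'"
    using orbital_sa_decomposition orb idx(1,4) by blast
  show ?thesis by (rule change_basis_orbit_decompositions_sparse[OF act finX K H HK finH R D D'])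
qed

end
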